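(* Let $A\ge0$. A smooth path $c:[a,b]\times S^1\to\mathbb R^2$ of immersions is a critical point of the energy $$E_{G^A}(c)=\tfrac12\int_a^b\!\!\int_{S^1}(1+A\kappa_{c(t)}^2)\langle c_t,c_t\rangle|c_\theta|\,d\theta\,dt$$ with respect to all smooth variations with fixed endpoints $c(a,\cdot),c(b,\cdot)$ if and only if $$\big((1+A\kappa^2)|c_\theta|\,c_t\big)_t=\Big(\frac{-1+A\kappa^2}{2}\,\frac{|c_t|^2}{|c_\theta|}\,c_\theta+A\,\frac{(\kappa|c_t|^2)_\theta}{|c_\theta|^2}\,ic_\theta\Big)_\theta,$$ where $\kappa=\kappa_{c(t)}(\theta)$.
   Context: $S^1=\mathbb R/2\pi\mathbb Z$, $\mathbb R^2\cong\mathbb C$ (so $i$ denotes rotation by $\pi/2$). Subscripts denote partial derivatives. $\kappa_c=\det(c_\theta,c_{\theta\theta})/|c_\theta|^3$ is the curvature of the immersion $c$. *)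

theory Defs
  imports "HOL-Analysis.Analysis"
begin

text \<open>C-infinity smoothness of a function of two real variables on a set S
  (here S = [a,b] x R), via one-sided (within S) derivatives: f is smooth iff it is
  Frechet differentiable on S with partial derivatives g1, g2 that are again smooth.\<close>
coinductive smooth_on :: "(real \<times> real) set \<Rightarrow> (real \<times> real \<Rightarrow> 'a::real_normed_vector) \<Rightarrow> bool"
  for S where
  "(\<And>x. x \<in> S \<Longrightarrow> (f has_derivative (\<lambda>(u, v). u *\<^sub>R g1 x + v *\<^sub>R g2 x)) (at x within S))
   \<Longrightarrow> smooth_on S g1 \<Longrightarrow> smooth_on S g2 \<Longrightarrow> smooth_on S f"

text \<open>Paths c : [a,b] x S^1 -> C are represented as curried maps c t \<theta>, 2pi-periodic in \<theta>.\<close>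
definition smooth_path :: "real \<Rightarrow> real \<Rightarrow> (real \<Rightarrow> real \<Rightarrow> complex) \<Rightarrow> bool" where
  "smooth_path a b c \<longleftrightarrow> smooth_on ({a..b} \<times> UNIV) (\<lambda>(t, \<theta>). c t \<theta>)
      \<and> (\<forall>t\<in>{a..b}. \<forall>\<theta>. c t (\<theta> + 2 * pi) = c t \<theta>)"

definition dT :: "real \<Rightarrow> real \<Rightarrow> (real \<Rightarrow> real \<Rightarrow> 'a::real_normed_vector) \<Rightarrow> real \<Rightarrow> real \<Rightarrow> 'a" where
  "dT a b f t \<theta> = vector_derivative (\<lambda>s. f s \<theta>) (at t within {a..b})"

definition dTh :: "(real \<Rightarrow> real \<Rightarrow> 'a::real_normed_vector) \<Rightarrow> real \<Rightarrow> real \<Rightarrow> 'a" where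
  "dTh f t \<theta> = vector_derivative (\<lambda>\<phi>. f t \<phi>) (at \<theta>)"

definition immersion_path :: "real \<Rightarrow> real \<Rightarrow> (real \<Rightarrow> real \<Rightarrow> complex) \<Rightarrow> bool" where
  "immersion_path a b c \<longleftrightarrow> (\<forall>t\<in>{a..b}. \<forall>\<theta>. dTh c t \<theta> \<noteq> 0)"

definition det2 :: "complex \<Rightarrow> complex \<Rightarrow> real" where
  "det2 z w = Re z * Im w - Im z * Re w"

definition curv :: "(real \<Rightarrow> real \<Rightarrow> complex) \<Rightarrow> real \<Rightarrow> real \<Rightarrow> real" where
  "curv c t \<theta> = det2 (dTh c t \<theta>) (dTh (dTh c) t \<theta>) / cmod (dTh c t \<theta>) ^ 3"

definition energy :: "real \<Rightarrow> real \<Rightarrow> real \<Rightarrow> (real \<Rightarrow> real \<Rightarrow> complex) \<Rightarrow> real" where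
  "energy A a b c = 1/2 * integral {a..b} (\<lambda>t. integral {0..2*pi} (\<lambda>\<theta>.
      (1 + A * (curv c t \<theta>)\<^sup>2) * (cmod (dT a b c t \<theta>))\<^sup>2 * cmod (dTh c t \<theta>)))"

definition admissible_variation :: "real \<Rightarrow> real \<Rightarrow> (real \<Rightarrow> real \<Rightarrow> complex) \<Rightarrow> bool" where
  "admissible_variation a b h \<longleftrightarrow> smooth_path a b h \<and> (\<forall>\<theta>. h a \<theta> = 0 \<and> h b \<theta> = 0)"

definition critical_point :: "real \<Rightarrow> real \<Rightarrow> real \<Rightarrow> (real \<Rightarrow> real \<Rightarrow> complex) \<Rightarrow> bool" where
  "critical_point A a b c \<longleftrightarrow> (\<forall>h. admissible_variation a b h \<longrightarrow>
      ((\<lambda>s. energy A a b (\<lambda>t \<theta>. c t \<theta> + of_real s * h t \<theta>)) has_real_derivative 0) (at 0))"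

definition geodesic_eq :: "real \<Rightarrow> real \<Rightarrow> real \<Rightarrow> (real \<Rightarrow> real \<Rightarrow> complex) \<Rightarrow> bool" where
  "geodesic_eq A a b c \<longleftrightarrow> (\<forall>t\<in>{a..b}. \<forall>\<theta>.
     dT a b (\<lambda>t \<theta>. of_real ((1 + A * (curv c t \<theta>)\<^sup>2) * cmod (dTh c t \<theta>)) * dT a b c t \<theta>) t \<theta>
   = dTh (\<lambda>t \<theta>. of_real ((-1 + A * (curv c t \<theta>)\<^sup>2) / 2 * (cmod (dT a b c t \<theta>))\<^sup>2 / cmod (dTh c t \<theta>))
                   * dTh c t \<theta>
              + of_real (A * dTh (\<lambda>t \<theta>. curv c t \<theta> * (cmod (dT a b c t \<theta>))\<^sup>2) t \<theta>
                          / (cmod (dTh c t \<theta>))\<^sup>2) * (\<i> * dTh c t \<theta>)) t \<theta>)"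

end

theory Submission
  imports Defs
begin

(* Differentiating the energy along c + s h under the integral sign gives the integral of
   <(1 + A k^2)|c_th| c_t, h_t> + <Z1, h_th> + <Z2, h_thth>, where Z2 = A k |c_t|^2 / |c_th|^2 i c_th.
   Integrating by parts (in t, using h = 0 at t = a, b, and in theta, using periodicity), and
   rewriting Z1 - (Z2)_th via the Frenet-type decomposition of c_thth in the frame (c_th, i c_th),
   the first variation becomes -int <R, h>, where R = 0 is the geodesic equation.  Testing with
   h = (t - a)(b - t) R shows that this vanishes for all h exactly when R = 0. *)

section \<open>Smooth functions on a set\<close>

lemma smooth_onE:
  assumes "smooth_on S f"
  obtains g1 g2
  where "\<And>x. x \<in> S \<Longrightarrow> (f has_derivative (\<lambda>(u, v). u *\<^sub>R g1 x + v *\<^sub>R g2 x)) (at x within S)"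
    and "smooth_on S g1" and "smooth_on S g2"
  using assms by (cases rule: smooth_on.cases) blast

lemma smooth_on_coinduct_step:
  assumes "\<And>x. x \<in> S \<Longrightarrow> (f has_derivative (\<lambda>(u, v). u *\<^sub>R g1 x + v *\<^sub>R g2 x)) (at x within S)"
    and "X g1 \<or> smooth_on S g1" and "X g2 \<or> smooth_on S g2"
  shows "\<exists>f' g1 g2. f = f'
    \<and> (\<forall>x. x \<in> S \<longrightarrow> (f' has_derivative (\<lambda>(u, v). u *\<^sub>R g1 x + v *\<^sub>R g2 x)) (at x within S))
    \<and> (X g1 \<or> smooth_on S g1) \<and> (X g2 \<or> smooth_on S g2)"
  using assms by blast

lemma smooth_on_imp_continuous_on:
  assumes "smooth_on S f"
  shows "continuous_on S f"
proof -
  obtain g1 g2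
    where "\<And>x. x \<in> S \<Longrightarrow> (f has_derivative (\<lambda>(u, v). u *\<^sub>R g1 x + v *\<^sub>R g2 x)) (at x within S)"
    using smooth_onE[OF assms] by blast
  then show ?thesis
    unfolding continuous_on_eq_continuous_within using has_derivative_continuous by blast
qed

lemma smooth_on_cong:
  assumes "smooth_on S f" and "\<And>x. x \<in> S \<Longrightarrow> g x = f x"
  shows "smooth_on S g"
  using assms
proof (coinduction arbitrary: f g)
  case (smooth_on f g)
  obtain g1 g2
    where d: "\<And>x. x \<in> S \<Longrightarrow> (f has_derivative (\<lambda>(u, v). u *\<^sub>R g1 x + v *\<^sub>R g2 x)) (at x within S)"
      and s: "smooth_on S g1" "smooth_on S g2"
    using smooth_onE[OF smooth_on(1)] by blast
  have deriv: "(g has_derivative (\<lambda>(u, v). u *\<^sub>R g1 x + v *\<^sub>R g2 x)) (at x within S)" if "x \<in> S" for x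
    by (rule has_derivative_transform_within[OF d[OF that] zero_less_one that]) (simp add: smooth_on(2))
  show ?case using s by (intro smooth_on_coinduct_step[OF deriv]) auto
qed

lemma smooth_on_const: "smooth_on S (\<lambda>x. k)"
proof (coinduction arbitrary: k)
  case (smooth_on k)
  have deriv: "((\<lambda>x. k) has_derivative (\<lambda>(u, v). u *\<^sub>R (\<lambda>_. 0::'a) x + v *\<^sub>R (\<lambda>_. 0) x))
      (at x within S)" for x
    by (simp add: case_prod_unfold)
  show ?case by (rule smooth_on_coinduct_step[OF deriv]) auto
qed

lemma smooth_on_fst: "smooth_on S fst"
proof (rule smooth_on.intros[where ?g1.0 = "\<lambda>_. 1" and ?g2.0 = "\<lambda>_. 0"])
  have "(\<lambda>(u, v). u *\<^sub>R (1::real) + v *\<^sub>R 0) = (fst :: real \<times> real \<Rightarrow> real)"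
    by auto
  then show "(fst has_derivative (\<lambda>(u, v). u *\<^sub>R (\<lambda>_. 1::real) x + v *\<^sub>R (\<lambda>_. 0) x)) (at x within S)" for x
    by (simp add: has_derivative_fst[OF has_derivative_ident])
qed (rule smooth_on_const)+

lemma smooth_on_linear:
  assumes L: "bounded_linear L" and f: "smooth_on S f"
  shows "smooth_on S (\<lambda>x. L (f x))"
  using f
proof (coinduction arbitrary: f)
  case (smooth_on f)
  obtain g1 g2
    where d: "\<And>x. x \<in> S \<Longrightarrow> (f has_derivative (\<lambda>(u, v). u *\<^sub>R g1 x + v *\<^sub>R g2 x)) (at x within S)"
      and s: "smooth_on S g1" "smooth_on S g2"
    using smooth_onE[OF smooth_on] by blast
  have deriv: "((\<lambda>x. L (f x)) has_derivative (\<lambda>(u, v). u *\<^sub>R L (g1 x) + v *\<^sub>R L (g2 x))) (at x within S)"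
    if "x \<in> S" for x
    using bounded_linear.has_derivative[OF L d[OF that]]
    by (simp add: case_prod_beta' linear_add[OF bounded_linear.linear[OF L]]
        linear_scale[OF bounded_linear.linear[OF L]])
  show ?case using s by (intro smooth_on_coinduct_step[OF deriv]) auto
qed

lemma smooth_on_add:
  assumes "smooth_on S f" and "smooth_on S g"
  shows "smooth_on S (\<lambda>x. f x + g x)"
  using assms
proof (coinduction arbitrary: f g)
  case (smooth_on f g)
  obtain f1 f2
    where df: "\<And>x. x \<in> S \<Longrightarrow> (f has_derivative (\<lambda>(u, v). u *\<^sub>R f1 x + v *\<^sub>R f2 x)) (at x within S)"
      and sf: "smooth_on S f1" "smooth_on S f2"
    using smooth_onE[OF smooth_on(1)] by blast
  obtain g1 g2
    where dg: "\<And>x. x \<in> S \<Longrightarrow> (g has_derivative (\<lambda>(u, v). u *\<^sub>R g1 x + v *\<^sub>R g2 x)) (at x within S)"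
      and sg: "smooth_on S g1" "smooth_on S g2"
    using smooth_onE[OF smooth_on(2)] by blast
  have deriv: "((\<lambda>x. f x + g x) has_derivative
      (\<lambda>(u, v). u *\<^sub>R (f1 x + g1 x) + v *\<^sub>R (f2 x + g2 x))) (at x within S)" if "x \<in> S" for x
    using has_derivative_add[OF df[OF that] dg[OF that]]
    by (simp add: case_prod_beta' scaleR_right_distrib algebra_simps)
  show ?case using sf sg by (intro smooth_on_coinduct_step[OF deriv]) auto
qed

text \<open>Products of smooth functions are not closed under differentiation, but finite sums of
  them are; this is the class over which the coinduction for products runs.\<close>

inductive sum_of_products :: "(real \<times> real) set \<Rightarrow> (real \<times> real \<Rightarrow> 'a::real_normed_algebra) \<Rightarrow> bool"
  for S where
  product: "smooth_on S f \<Longrightarrow> smooth_on S g \<Longrightarrow> sum_of_products S (\<lambda>x. f x * g x)"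
| add: "sum_of_products S p \<Longrightarrow> sum_of_products S q \<Longrightarrow> sum_of_products S (\<lambda>x. p x + q x)"

lemma sum_of_products_has_derivative:
  assumes "sum_of_products S p"
  shows "\<exists>p1 p2. (\<forall>x\<in>S. (p has_derivative (\<lambda>(u, v). u *\<^sub>R p1 x + v *\<^sub>R p2 x)) (at x within S))
    \<and> sum_of_products S p1 \<and> sum_of_products S p2"
  using assms
proof induction
  case (product f g)
  obtain f1 f2
    where df: "\<And>x. x \<in> S \<Longrightarrow> (f has_derivative (\<lambda>(u, v). u *\<^sub>R f1 x + v *\<^sub>R f2 x)) (at x within S)"
      and "smooth_on S f1" "smooth_on S f2"
    using smooth_onE[OF product(1)] by blast
  moreover obtain g1 g2
    where dg: "\<And>x. x \<in> S \<Longrightarrow> (g has_derivative (\<lambda>(u, v). u *\<^sub>R g1 x + v *\<^sub>R g2 x)) (at x within S)"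
      and "smooth_on S g1" "smooth_on S g2"
    using smooth_onE[OF product(2)] by blast
  moreover have "((\<lambda>x. f x * g x) has_derivative (\<lambda>(u, v). u *\<^sub>R (f x * g1 x + f1 x * g x)
      + v *\<^sub>R (f x * g2 x + f2 x * g x))) (at x within S)" if "x \<in> S" for x
    using has_derivative_mult[OF df[OF that] dg[OF that]]
    by (simp add: case_prod_beta' scaleR_right_distrib distrib_left distrib_right algebra_simps)
  ultimately show ?case
    using product by (intro exI[of _ "\<lambda>x. f x * g1 x + f1 x * g x"] exI[of _ "\<lambda>x. f x * g2 x + f2 x * g x"])
      (auto intro!: sum_of_products.intros)
next
  case (add p q)
  then obtain p1 p2 q1 q2
    where dp: "\<forall>x\<in>S. (p has_derivative (\<lambda>(u, v). u *\<^sub>R p1 x + v *\<^sub>R p2 x)) (at x within S)"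
        "sum_of_products S p1" "sum_of_products S p2"
      and dq: "\<forall>x\<in>S. (q has_derivative (\<lambda>(u, v). u *\<^sub>R q1 x + v *\<^sub>R q2 x)) (at x within S)"
        "sum_of_products S q1" "sum_of_products S q2"
    by blast
  have "((\<lambda>x. p x + q x) has_derivative
      (\<lambda>(u, v). u *\<^sub>R (p1 x + q1 x) + v *\<^sub>R (p2 x + q2 x))) (at x within S)" if "x \<in> S" for x
    using has_derivative_add[OF dp(1)[rule_format, OF that] dq(1)[rule_format, OF that]]
    by (simp add: case_prod_beta' scaleR_right_distrib algebra_simps)
  then show ?case
    using dp dq by (intro exI[of _ "\<lambda>x. p1 x + q1 x"] exI[of _ "\<lambda>x. p2 x + q2 x"])
      (auto intro!: sum_of_products.intros)
qed

lemma sum_of_products_smooth: "sum_of_products S p \<Longrightarrow> smooth_on S p"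
proof (coinduction arbitrary: p)
  case (smooth_on p)
  then obtain p1 p2
    where "\<forall>x\<in>S. (p has_derivative (\<lambda>(u, v). u *\<^sub>R p1 x + v *\<^sub>R p2 x)) (at x within S)"
      and "sum_of_products S p1" "sum_of_products S p2"
    using sum_of_products_has_derivative by blast
  then show ?case by (intro smooth_on_coinduct_step) auto
qed

lemma smooth_on_mult:
  fixes f g :: "real \<times> real \<Rightarrow> 'a::real_normed_algebra"
  assumes "smooth_on S f" and "smooth_on S g"
  shows "smooth_on S (\<lambda>x. f x * g x)"
  by (rule sum_of_products_smooth[OF sum_of_products.product[OF assms]])

lemma smooth_on_minus: "smooth_on S f \<Longrightarrow> smooth_on S (\<lambda>x. - f x)"
  using smooth_on_linear[of uminus S f] bounded_linear_minus[OF bounded_linear_ident] by simp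

lemma smooth_on_diff: "smooth_on S f \<Longrightarrow> smooth_on S g \<Longrightarrow> smooth_on S (\<lambda>x. f x - g x)"
  using smooth_on_add[OF _ smooth_on_minus, of S f g] by simp

lemma smooth_on_Re: "smooth_on S f \<Longrightarrow> smooth_on S (\<lambda>x. Re (f x))"
  by (rule smooth_on_linear[OF bounded_linear_Re])

lemma smooth_on_Im: "smooth_on S f \<Longrightarrow> smooth_on S (\<lambda>x. Im (f x))"
  by (rule smooth_on_linear[OF bounded_linear_Im])

lemma smooth_on_of_real: "smooth_on S f \<Longrightarrow> smooth_on S (\<lambda>x. complex_of_real (f x))"
  by (rule smooth_on_linear[OF bounded_linear_of_real])

lemma smooth_on_power:
  fixes f :: "real \<times> real \<Rightarrow> 'a::real_normed_algebra_1"
  shows "smooth_on S f \<Longrightarrow> smooth_on S (\<lambda>x. f x ^ n)"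
  by (induction n) (auto intro: smooth_on_const smooth_on_mult)

lemma has_derivative_mult_inverse_power:
  fixes f g :: "'a::real_normed_vector \<Rightarrow> real"
  assumes f: "(f has_derivative f') (at x within S)" and g: "(g has_derivative g') (at x within S)"
    and nz: "f x \<noteq> 0"
  shows "((\<lambda>x. g x * inverse (f x) ^ n) has_derivative
     (\<lambda>h. (g' h * f x - real n * g x * f' h) * inverse (f x) ^ Suc n)) (at x within S)"
proof (rule has_derivative_eq_rhs)
  show "((\<lambda>x. g x * inverse (f x) ^ n) has_derivative (\<lambda>h. g x * (of_nat n
      * (- (inverse (f x) * f' h * inverse (f x))) * inverse (f x) ^ (n - 1)) + g' h * inverse (f x) ^ n))
    (at x within S)"
    by (intro has_derivative_mult has_derivative_power Deriv.has_derivative_inverse f g nz)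
  show "(\<lambda>h. g x * (of_nat n * (- (inverse (f x) * f' h * inverse (f x))) * inverse (f x) ^ (n - 1))
      + g' h * inverse (f x) ^ n) = (\<lambda>h. (g' h * f x - real n * g x * f' h) * inverse (f x) ^ Suc n)"
  proof
    fix h
    show "g x * (of_nat n * (- (inverse (f x) * f' h * inverse (f x))) * inverse (f x) ^ (n - 1))
        + g' h * inverse (f x) ^ n = (g' h * f x - real n * g x * f' h) * inverse (f x) ^ Suc n"
      using nz by (cases n) (simp_all add: field_simps)
  qed
qed

text \<open>Stated for \<open>g * inverse f ^ n\<close> so that the class coinducted over is closed under
  differentiation.\<close>

lemma smooth_on_mult_inverse_power:
  fixes f g :: "real \<times> real \<Rightarrow> real"
  assumes f: "smooth_on S f" and nz: "\<And>x. x \<in> S \<Longrightarrow> f x \<noteq> 0" and g: "smooth_on S g"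
  shows "smooth_on S (\<lambda>x. g x * inverse (f x) ^ n)"
  using g
proof (coinduction arbitrary: g n)
  case (smooth_on g n)
  obtain f1 f2
    where df: "\<And>x. x \<in> S \<Longrightarrow> (f has_derivative (\<lambda>(u, v). u *\<^sub>R f1 x + v *\<^sub>R f2 x)) (at x within S)"
      and sf: "smooth_on S f1" "smooth_on S f2"
    using smooth_onE[OF f] by blast
  obtain g1 g2
    where dg: "\<And>x. x \<in> S \<Longrightarrow> (g has_derivative (\<lambda>(u, v). u *\<^sub>R g1 x + v *\<^sub>R g2 x)) (at x within S)"
      and sg: "smooth_on S g1" "smooth_on S g2"
    using smooth_onE[OF smooth_on] by blast
  define k1 where "k1 x = g1 x * f x - real n * g x * f1 x" for x
  define k2 where "k2 x = g2 x * f x - real n * g x * f2 x" for x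
  have deriv: "((\<lambda>x. g x * inverse (f x) ^ n) has_derivative (\<lambda>(u, v). u *\<^sub>R (k1 x * inverse (f x) ^ Suc n)
      + v *\<^sub>R (k2 x * inverse (f x) ^ Suc n))) (at x within S)" if "x \<in> S" for x
    using has_derivative_mult_inverse_power[OF df[OF that] dg[OF that] nz[OF that], of n]
    by (simp add: k1_def k2_def case_prod_beta' algebra_simps)
  moreover have "smooth_on S k1" "smooth_on S k2"
    unfolding k1_def k2_def using sf sg f smooth_on
    by (auto intro!: smooth_on_diff smooth_on_mult smooth_on_const)
  ultimately show ?case by (intro smooth_on_coinduct_step[OF deriv]) blast+
qed

lemma smooth_on_inverse:
  fixes f :: "real \<times> real \<Rightarrow> real"
  assumes "smooth_on S f" and "\<And>x. x \<in> S \<Longrightarrow> f x \<noteq> 0"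
  shows "smooth_on S (\<lambda>x. inverse (f x))"
  using smooth_on_mult_inverse_power[OF assms smooth_on_const, of 1 1] by simp

lemma has_derivative_mult_sqrt_inverse_power:
  fixes f g :: "'a::real_normed_vector \<Rightarrow> real"
  assumes f: "(f has_derivative f') (at x within S)" and g: "(g has_derivative g') (at x within S)"
    and pos: "f x > 0"
  shows "((\<lambda>x. g x * sqrt (f x) * inverse (f x) ^ n) has_derivative
     (\<lambda>h. (g' h * f x + (1/2 - real n) * g x * f' h) * sqrt (f x) * inverse (f x) ^ Suc n)) (at x within S)"
proof (rule has_derivative_eq_rhs)
  have "((\<lambda>x. g x * sqrt (f x)) has_derivative
      (\<lambda>h. g' h * sqrt (f x) + g x * (f' h * (inverse (sqrt (f x)) / 2)))) (at x within S)"
    by (rule has_derivative_eq_rhs[OF has_derivative_mult[OF g has_derivative_real_sqrt[OF pos f]]])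
      (simp add: algebra_simps)
  then show "((\<lambda>x. g x * sqrt (f x) * inverse (f x) ^ n) has_derivative
      (\<lambda>h. ((g' h * sqrt (f x) + g x * (f' h * (inverse (sqrt (f x)) / 2))) * f x
        - real n * (g x * sqrt (f x)) * f' h) * inverse (f x) ^ Suc n)) (at x within S)"
    using pos by (intro has_derivative_mult_inverse_power f) auto
  show "(\<lambda>h. ((g' h * sqrt (f x) + g x * (f' h * (inverse (sqrt (f x)) / 2))) * f x
        - real n * (g x * sqrt (f x)) * f' h) * inverse (f x) ^ Suc n)
      = (\<lambda>h. (g' h * f x + (1/2 - real n) * g x * f' h) * sqrt (f x) * inverse (f x) ^ Suc n)"
  proof
    fix h
    have i: "inverse (sqrt (f x)) * f x = sqrt (f x)"
      using pos by (simp add: field_simps)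
    have "g x * (f' h * (inverse (sqrt (f x)) / 2)) * f x
        = g x * f' h * (inverse (sqrt (f x)) * f x) / 2"
      by (simp add: ac_simps)
    also have "\<dots> = g x * f' h * sqrt (f x) / 2"
      by (simp only: i)
    finally have e: "g x * (f' h * (inverse (sqrt (f x)) / 2)) * f x = g x * f' h * sqrt (f x) / 2" .
    have "(g' h * sqrt (f x) + g x * (f' h * (inverse (sqrt (f x)) / 2))) * f x
        - real n * (g x * sqrt (f x)) * f' h
      = g' h * sqrt (f x) * f x + g x * f' h * sqrt (f x) / 2 - real n * (g x * sqrt (f x)) * f' h"
      by (simp only: distrib_right e)
    also have "\<dots> = (g' h * f x + (1/2 - real n) * g x * f' h) * sqrt (f x)"
      by (simp add: algebra_simps)
    finally show "((g' h * sqrt (f x) + g x * (f' h * (inverse (sqrt (f x)) / 2))) * f x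
        - real n * (g x * sqrt (f x)) * f' h) * inverse (f x) ^ Suc n
      = (g' h * f x + (1/2 - real n) * g x * f' h) * sqrt (f x) * inverse (f x) ^ Suc n"
      by simp
  qed
qed

lemma smooth_on_mult_sqrt_inverse_power:
  fixes f g :: "real \<times> real \<Rightarrow> real"
  assumes f: "smooth_on S f" and pos: "\<And>x. x \<in> S \<Longrightarrow> f x > 0" and g: "smooth_on S g"
  shows "smooth_on S (\<lambda>x. g x * sqrt (f x) * inverse (f x) ^ n)"
  using g
proof (coinduction arbitrary: g n)
  case (smooth_on g n)
  obtain f1 f2
    where df: "\<And>x. x \<in> S \<Longrightarrow> (f has_derivative (\<lambda>(u, v). u *\<^sub>R f1 x + v *\<^sub>R f2 x)) (at x within S)"
      and sf: "smooth_on S f1" "smooth_on S f2"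
    using smooth_onE[OF f] by blast
  obtain g1 g2
    where dg: "\<And>x. x \<in> S \<Longrightarrow> (g has_derivative (\<lambda>(u, v). u *\<^sub>R g1 x + v *\<^sub>R g2 x)) (at x within S)"
      and sg: "smooth_on S g1" "smooth_on S g2"
    using smooth_onE[OF smooth_on] by blast
  define k1 where "k1 x = g1 x * f x + (1/2 - real n) * g x * f1 x" for x
  define k2 where "k2 x = g2 x * f x + (1/2 - real n) * g x * f2 x" for x
  have deriv: "((\<lambda>x. g x * sqrt (f x) * inverse (f x) ^ n) has_derivative
      (\<lambda>(u, v). u *\<^sub>R (k1 x * sqrt (f x) * inverse (f x) ^ Suc n)
        + v *\<^sub>R (k2 x * sqrt (f x) * inverse (f x) ^ Suc n))) (at x within S)" if "x \<in> S" for x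
    using has_derivative_mult_sqrt_inverse_power[OF df[OF that] dg[OF that] pos[OF that], of n]
    by (simp add: k1_def k2_def case_prod_beta' algebra_simps)
  moreover have "smooth_on S k1" "smooth_on S k2"
    unfolding k1_def k2_def using sf sg f smooth_on
    by (auto intro!: smooth_on_add smooth_on_mult smooth_on_const)
  ultimately show ?case by (intro smooth_on_coinduct_step[OF deriv]) blast+
qed

lemma smooth_on_cmod:
  fixes f :: "real \<times> real \<Rightarrow> complex"
  assumes f: "smooth_on S f" and nz: "\<And>x. x \<in> S \<Longrightarrow> f x \<noteq> 0"
  shows "smooth_on S (\<lambda>x. cmod (f x))"
proof -
  have "smooth_on S (\<lambda>x. 1 * sqrt ((Re (f x))\<^sup>2 + (Im (f x))\<^sup>2) * inverse ((Re (f x))\<^sup>2 + (Im (f x))\<^sup>2) ^ 0)"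
    using nz by (intro smooth_on_mult_sqrt_inverse_power smooth_on_add smooth_on_power smooth_on_Re
        smooth_on_Im smooth_on_const f) (auto simp: complex_neq_0)
  then show ?thesis by (simp add: cmod_def)
qed

section \<open>Partial derivatives on a strip and periodicity\<close>

abbreviation strip :: "real \<Rightarrow> real \<Rightarrow> (real \<times> real) set" where
  "strip a b \<equiv> {a..b} \<times> UNIV"

abbreviation rect :: "real \<Rightarrow> real \<Rightarrow> (real \<times> real) set" where
  "rect a b \<equiv> cbox (a, 0) (b, 2 * pi)"

lemma rect_subset_strip: "rect a b \<subseteq> strip a b"
  unfolding cbox_Pair_eq by (auto simp: cbox_interval)

lemma smooth_on_partials:
  fixes f :: "real \<Rightarrow> real \<Rightarrow> 'a::real_normed_vector"
  assumes ab: "a < b" and f: "smooth_on (strip a b) (\<lambda>x. f (fst x) (snd x))"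
  shows has_vector_derivative_dT:
      "\<And>t \<theta>. t \<in> {a..b} \<Longrightarrow> ((\<lambda>s. f s \<theta>) has_vector_derivative dT a b f t \<theta>) (at t within {a..b})"
    and has_vector_derivative_dTh:
      "\<And>t \<theta>. t \<in> {a..b} \<Longrightarrow> ((\<lambda>\<phi>. f t \<phi>) has_vector_derivative dTh f t \<theta>) (at \<theta>)"
    and smooth_on_dT: "smooth_on (strip a b) (\<lambda>x. dT a b f (fst x) (snd x))"
    and smooth_on_dTh: "smooth_on (strip a b) (\<lambda>x. dTh f (fst x) (snd x))"
proof -
  obtain g1 g2
    where d: "\<And>x. x \<in> strip a b \<Longrightarrow> ((\<lambda>x. f (fst x) (snd x)) has_derivative
        (\<lambda>(u, v). u *\<^sub>R g1 x + v *\<^sub>R g2 x)) (at x within strip a b)"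
      and g: "smooth_on (strip a b) g1" "smooth_on (strip a b) g2"
    using smooth_onE[OF f] by blast
  have d1: "((\<lambda>s. f s \<theta>) has_vector_derivative g1 (t, \<theta>)) (at t within {a..b})" if t: "t \<in> {a..b}" for t \<theta>
  proof -
    have "((\<lambda>s. (s, \<theta>)) has_derivative (\<lambda>y. (y, 0))) (at t within {a..b})"
      by (auto intro!: derivative_eq_intros)
    moreover have "((\<lambda>x. f (fst x) (snd x)) has_derivative (\<lambda>(u, v). u *\<^sub>R g1 (t, \<theta>) + v *\<^sub>R g2 (t, \<theta>)))
        (at (t, \<theta>) within (\<lambda>s. (s, \<theta>)) ` {a..b})"
      using d[of "(t, \<theta>)"] t by (auto intro: has_derivative_subset)
    ultimately show ?thesis
      using diff_chain_within unfolding has_vector_derivative_def by (fastforce simp: o_def)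
  qed
  have d2: "((\<lambda>\<phi>. f t \<phi>) has_vector_derivative g2 (t, \<theta>)) (at \<theta>)" if t: "t \<in> {a..b}" for t \<theta>
  proof -
    have "((\<lambda>s. (t, s)) has_derivative (\<lambda>y. (0, y))) (at \<theta> within UNIV)"
      by (auto intro!: derivative_eq_intros)
    moreover have "((\<lambda>x. f (fst x) (snd x)) has_derivative (\<lambda>(u, v). u *\<^sub>R g1 (t, \<theta>) + v *\<^sub>R g2 (t, \<theta>)))
        (at (t, \<theta>) within range (\<lambda>s. (t, s)))"
      using d[of "(t, \<theta>)"] t by (auto intro: has_derivative_subset)
    ultimately show ?thesis
      using diff_chain_within unfolding has_vector_derivative_def by (fastforce simp: o_def)
  qed
  have g1_eq: "dT a b f t \<theta> = g1 (t, \<theta>)" if "t \<in> {a..b}" for t \<theta>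
    using vector_derivative_within_cbox[OF ab, of t "\<lambda>s. f s \<theta>"] d1[OF that, of \<theta>] that
    by (simp add: dT_def cbox_interval)
  have g2_eq: "dTh f t \<theta> = g2 (t, \<theta>)" if "t \<in> {a..b}" for t \<theta>
    unfolding dTh_def using vector_derivative_at d2[OF that, of \<theta>] by blast
  show "\<And>t \<theta>. t \<in> {a..b} \<Longrightarrow> ((\<lambda>s. f s \<theta>) has_vector_derivative dT a b f t \<theta>) (at t within {a..b})"
    using d1 g1_eq by simp
  show "\<And>t \<theta>. t \<in> {a..b} \<Longrightarrow> ((\<lambda>\<phi>. f t \<phi>) has_vector_derivative dTh f t \<theta>) (at \<theta>)"
    using d2 g2_eq by simp
  show "smooth_on (strip a b) (\<lambda>x. dT a b f (fst x) (snd x))"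
    by (rule smooth_on_cong[OF g(1)]) (auto simp: g1_eq)
  show "smooth_on (strip a b) (\<lambda>x. dTh f (fst x) (snd x))"
    by (rule smooth_on_cong[OF g(2)]) (auto simp: g2_eq)
qed

lemma periodic_add_int_mult:
  assumes "\<And>\<theta>. g (\<theta> + p) = g \<theta>"
  shows "g (\<theta> + of_int k * p) = g \<theta>"
proof (induction k rule: int_induct[where k = 0])
  case (step1 i)
  have "g (\<theta> + of_int (i + 1) * p) = g ((\<theta> + of_int i * p) + p)"
    by (simp add: algebra_simps)
  with assms step1 show ?case by simp
next
  case (step2 i)
  have "g (\<theta> + of_int i * p) = g ((\<theta> + of_int (i - 1) * p) + p)"
    by (simp add: algebra_simps)
  with assms step2 show ?case by simp
qed simp

lemma periodic_representative:
  assumes "\<And>\<theta>. g (\<theta> + 2 * pi) = g \<theta>"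
  obtains \<theta>' where "\<theta>' \<in> {0..2*pi}" and "g \<theta> = g \<theta>'"
proof
  define k where "k = \<lfloor>\<theta> / (2 * pi)\<rfloor>"
  have "of_int k \<le> \<theta> / (2 * pi)" "\<theta> / (2 * pi) < of_int k + 1"
    unfolding k_def by linarith+
  then have "of_int k * (2 * pi) \<le> \<theta>" "\<theta> < (of_int k + 1) * (2 * pi)"
    by (simp_all add: field_simps)
  then show "\<theta> - of_int k * (2 * pi) \<in> {0..2*pi}"
    by (auto simp: algebra_simps)
  show "g \<theta> = g (\<theta> - of_int k * (2 * pi))"
    using periodic_add_int_mult[of g "2*pi" "\<theta> - of_int k * (2 * pi)" k, OF assms] by simp
qed

lemma dTh_periodic:
  fixes f :: "real \<Rightarrow> real \<Rightarrow> 'a::real_normed_vector"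
  assumes per: "\<And>\<phi>. f t (\<phi> + 2 * pi) = f t \<phi>"
    and d: "\<And>\<phi>. ((\<lambda>\<phi>. f t \<phi>) has_vector_derivative dTh f t \<phi>) (at \<phi>)"
  shows "dTh f t (\<theta> + 2 * pi) = dTh f t \<theta>"
proof -
  have "((\<lambda>\<phi>. \<phi> + 2 * pi) has_vector_derivative 1) (at \<theta>)"
    by (auto intro!: derivative_eq_intros)
  from vector_diff_chain_at[OF this d[of "\<theta> + 2 * pi"]]
  have "((\<lambda>\<phi>. f t \<phi>) has_vector_derivative dTh f t (\<theta> + 2 * pi)) (at \<theta>)"
    by (simp add: o_def per)
  then show ?thesis using vector_derivative_unique_at d by blast
qed

lemma dT_periodic:
  fixes f :: "real \<Rightarrow> real \<Rightarrow> 'a::real_normed_vector"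
  assumes ab: "a < b" and t: "t \<in> {a..b}"
    and per: "\<And>s \<phi>. s \<in> {a..b} \<Longrightarrow> f s (\<phi> + 2 * pi) = f s \<phi>"
    and d: "\<And>\<phi>. ((\<lambda>s. f s \<phi>) has_vector_derivative dT a b f t \<phi>) (at t within {a..b})"
  shows "dT a b f t (\<theta> + 2 * pi) = dT a b f t \<theta>"
proof -
  have "((\<lambda>s. f s \<theta>) has_vector_derivative dT a b f t (\<theta> + 2 * pi)) (at t within {a..b})"
    by (rule has_vector_derivative_transform_within[OF d[of "\<theta> + 2 * pi"] zero_less_one t])
      (simp add: per)
  then show ?thesis
    using vector_derivative_within_cbox[OF ab, of t "\<lambda>s. f s \<theta>"] t by (simp add: dT_def cbox_interval)
qed

definition smooth_periodic :: "real \<Rightarrow> real \<Rightarrow> (real \<Rightarrow> real \<Rightarrow> 'a::real_normed_vector) \<Rightarrow> bool" where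
  "smooth_periodic a b g \<longleftrightarrow> smooth_on (strip a b) (\<lambda>x. g (fst x) (snd x))
    \<and> (\<forall>t\<in>{a..b}. \<forall>\<theta>. g t (\<theta> + 2 * pi) = g t \<theta>)"

lemma smooth_path_imp_smooth_periodic: "smooth_path a b c \<Longrightarrow> smooth_periodic a b c"
  unfolding smooth_path_def smooth_periodic_def by (simp add: case_prod_unfold)

lemma smooth_periodicD:
  assumes "smooth_periodic a b g"
  shows smooth_periodic_smooth_on: "smooth_on (strip a b) (\<lambda>x. g (fst x) (snd x))"
    and smooth_periodic_periodic: "t \<in> {a..b} \<Longrightarrow> g t (\<theta> + 2 * pi) = g t \<theta>"
  using assms unfolding smooth_periodic_def by auto

lemma smooth_periodic_continuous_on:
  "smooth_periodic a b g \<Longrightarrow> continuous_on (strip a b) (\<lambda>x. g (fst x) (snd x))"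
  by (rule smooth_on_imp_continuous_on[OF smooth_periodic_smooth_on])

lemma smooth_periodic_continuous_on_rect:
  "smooth_periodic a b g \<Longrightarrow> continuous_on (rect a b) (\<lambda>x. g (fst x) (snd x))"
  by (rule continuous_on_subset[OF smooth_periodic_continuous_on rect_subset_strip])

lemma smooth_periodic_has_vector_derivative_dT:
  "a < b \<Longrightarrow> smooth_periodic a b g \<Longrightarrow> t \<in> {a..b} \<Longrightarrow>
    ((\<lambda>s. g s \<theta>) has_vector_derivative dT a b g t \<theta>) (at t within {a..b})"
  by (rule has_vector_derivative_dT[OF _ smooth_periodic_smooth_on])

lemma smooth_periodic_has_vector_derivative_dTh:
  "a < b \<Longrightarrow> smooth_periodic a b g \<Longrightarrow> t \<in> {a..b} \<Longrightarrow>
    ((\<lambda>\<phi>. g t \<phi>) has_vector_derivative dTh g t \<theta>) (at \<theta>)"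
  by (rule has_vector_derivative_dTh[OF _ smooth_periodic_smooth_on])

lemma smooth_periodic_dT:
  assumes ab: "a < b" and g: "smooth_periodic a b g"
  shows "smooth_periodic a b (dT a b g)"
  unfolding smooth_periodic_def
proof (intro conjI ballI allI)
  show "smooth_on (strip a b) (\<lambda>x. dT a b g (fst x) (snd x))"
    by (rule smooth_on_dT[OF ab smooth_periodic_smooth_on[OF g]])
  show "dT a b g t (\<theta> + 2 * pi) = dT a b g t \<theta>" if "t \<in> {a..b}" for t \<theta>
    by (rule dT_periodic[OF ab that smooth_periodic_periodic[OF g]
          smooth_periodic_has_vector_derivative_dT[OF ab g that]])
qed

lemma smooth_periodic_dTh:
  assumes ab: "a < b" and g: "smooth_periodic a b g"
  shows "smooth_periodic a b (dTh g)"
  unfolding smooth_periodic_def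
proof (intro conjI ballI allI)
  show "smooth_on (strip a b) (\<lambda>x. dTh g (fst x) (snd x))"
    by (rule smooth_on_dTh[OF ab smooth_periodic_smooth_on[OF g]])
  show "dTh g t (\<theta> + 2 * pi) = dTh g t \<theta>" if "t \<in> {a..b}" for t \<theta>
    by (rule dTh_periodic[OF smooth_periodic_periodic[OF g that]
          smooth_periodic_has_vector_derivative_dTh[OF ab g that]])
qed

lemma smooth_periodic_continuous_in_t:
  assumes "smooth_periodic a b g"
  shows "continuous_on {a..b} (\<lambda>s. g s \<theta>)"
proof -
  have "continuous_on {a..b} (\<lambda>s. (\<lambda>x. g (fst x) (snd x)) (s, \<theta>))"
    by (rule continuous_on_compose2[OF smooth_periodic_continuous_on[OF assms]])
      (auto intro!: continuous_intros)
  then show ?thesis by simp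
qed

lemma smooth_periodic_continuous_in_theta:
  assumes "smooth_periodic a b g" and "t \<in> {a..b}"
  shows "continuous_on T (\<lambda>\<phi>. g t \<phi>)"
proof -
  have "continuous_on T (\<lambda>\<phi>. (\<lambda>x. g (fst x) (snd x)) (t, \<phi>))"
    by (rule continuous_on_compose2[OF smooth_periodic_continuous_on[OF assms(1)]])
      (use assms(2) in \<open>auto intro!: continuous_intros\<close>)
  then show ?thesis by simp
qed

section \<open>The Lagrangian\<close>

text \<open>The integrand of the energy, with \<open>u, v, w\<close> standing for \<open>c\<^sub>t, c\<^sub>\<theta>, c\<^sub>\<theta>\<^sub>\<theta>\<close>,
  and its derivative along the direction \<open>(du, dv, dw)\<close> in the form produced by the chain rule.\<close>

definition lagrangian :: "real \<Rightarrow> complex \<Rightarrow> complex \<Rightarrow> complex \<Rightarrow> real" where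
  "lagrangian A u v w = (1 + A * (det2 v w / cmod v ^ 3)\<^sup>2) * (cmod u)\<^sup>2 * cmod v"

definition lagrangian_deriv ::
    "real \<Rightarrow> complex \<Rightarrow> complex \<Rightarrow> complex \<Rightarrow> complex \<Rightarrow> complex \<Rightarrow> complex \<Rightarrow> real" where
  "lagrangian_deriv A u v w du dv dw =
    A * (2 * (det2 v w / cmod v ^ 3) * (((det2 dv w + det2 v dw) * cmod v ^ 3
        - det2 v w * (3 * cmod v ^ 2 * ((v \<bullet> dv) / cmod v))) / (cmod v ^ 3 * cmod v ^ 3)))
      * (cmod u)\<^sup>2 * cmod v
    + (1 + A * (det2 v w / cmod v ^ 3)\<^sup>2) * (2 * (u \<bullet> du)) * cmod v
    + (1 + A * (det2 v w / cmod v ^ 3)\<^sup>2) * (cmod u)\<^sup>2 * ((v \<bullet> dv) / cmod v)"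

lemma has_real_derivative_cmod_line:
  fixes v dv :: complex
  assumes nz: "v + of_real s * dv \<noteq> 0"
  shows "((\<lambda>s. cmod (v + of_real s * dv)) has_real_derivative
    ((v + of_real s * dv) \<bullet> dv) / cmod (v + of_real s * dv)) (at s within U)"
proof -
  define q where "q s = (Re v + s * Re dv)\<^sup>2 + (Im v + s * Im dv)\<^sup>2" for s
  let ?q' = "2 * ((Re v + s * Re dv) * Re dv + (Im v + s * Im dv) * Im dv)"
  have q: "cmod (v + of_real s * dv) = sqrt (q s)" for s
    unfolding q_def by (simp add: cmod_def)
  have pos: "q s > 0"
    using complex_neq_0[of "v + of_real s * dv"] nz unfolding q_def by simp
  have dq: "(q has_real_derivative ?q') (at s within U)"
    unfolding q_def by (auto intro!: derivative_eq_intros simp: algebra_simps)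
  have "((\<lambda>s. sqrt (q s)) has_real_derivative inverse (sqrt (q s)) / 2 * ?q') (at s within U)"
    by (rule DERIV_chain2[OF DERIV_real_sqrt[OF pos] dq])
  moreover have "inverse (sqrt (q s)) / 2 * ?q' = ((v + of_real s * dv) \<bullet> dv) / sqrt (q s)"
    using pos by (simp add: inner_complex_def field_simps)
  ultimately show ?thesis
    by (simp only: q)
qed

lemma has_real_derivative_det2_line:
  fixes v dv w dw :: complex
  shows "((\<lambda>s. det2 (v + of_real s * dv) (w + of_real s * dw)) has_real_derivative
     det2 dv (w + of_real s * dw) + det2 (v + of_real s * dv) dw) (at s within U)"
  unfolding det2_def by (auto intro!: derivative_eq_intros simp: algebra_simps)

lemma has_real_derivative_cmod_square_line:
  fixes u du :: complex
  shows "((\<lambda>s. (cmod (u + of_real s * du))\<^sup>2) has_real_derivative 2 * ((u + of_real s * du) \<bullet> du))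
    (at s within U)"
  unfolding cmod_power2 inner_complex_def by (auto intro!: derivative_eq_intros simp: algebra_simps)

lemma has_real_derivative_lagrangian_line:
  fixes u v w du dv dw :: complex
  assumes nz: "v + of_real s * dv \<noteq> 0"
  shows "((\<lambda>s. lagrangian A (u + of_real s * du) (v + of_real s * dv) (w + of_real s * dw))
    has_real_derivative lagrangian_deriv A (u + of_real s * du) (v + of_real s * dv) (w + of_real s * dw) du dv dw)
    (at s within U)"
proof -
  let ?V = "\<lambda>s. v + of_real s * dv" and ?W = "\<lambda>s. w + of_real s * dw"
  let ?N' = "(?V s \<bullet> dv) / cmod (?V s)"
  let ?\<kappa> = "det2 (?V s) (?W s) / cmod (?V s) ^ 3"
  let ?\<kappa>' = "((det2 dv (?W s) + det2 (?V s) dw) * cmod (?V s) ^ 3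
    - det2 (?V s) (?W s) * (3 * cmod (?V s) ^ 2 * ?N')) / (cmod (?V s) ^ 3 * cmod (?V s) ^ 3)"
  have N: "((\<lambda>s. cmod (?V s)) has_real_derivative ?N') (at s within U)"
    by (rule has_real_derivative_cmod_line[OF nz])
  have "cmod (?V s) ^ 3 \<noteq> 0"
    using nz by simp
  then have K: "((\<lambda>s. det2 (?V s) (?W s) / cmod (?V s) ^ 3) has_real_derivative ?\<kappa>') (at s within U)"
    by (rule DERIV_cong[OF DERIV_divide[OF has_real_derivative_det2_line DERIV_power[OF N]]]) simp
  have "((\<lambda>s. 1 + A * (det2 (?V s) (?W s) / cmod (?V s) ^ 3)\<^sup>2) has_real_derivative A * (2 * ?\<kappa> * ?\<kappa>'))
      (at s within U)"
    by (rule DERIV_cong[OF DERIV_add[OF DERIV_const DERIV_cmult[OF DERIV_power[OF K]]]]) (simp add: algebra_simps)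
  from DERIV_mult[OF DERIV_mult[OF this has_real_derivative_cmod_square_line] N]
  show ?thesis
    unfolding lagrangian_def by (rule DERIV_cong) (simp add: lagrangian_deriv_def algebra_simps)
qed

lemma inner_ii_mult_left: "(\<i> * v) \<bullet> z = det2 v z"
  by (simp add: inner_complex_def det2_def algebra_simps)

lemma inner_of_real_mult_left: "(complex_of_real r * z) \<bullet> y = r * (z \<bullet> y)"
  by (simp add: inner_complex_def algebra_simps)

lemma lagrangian_deriv_eq_inner:
  fixes u v w du dv dw :: complex
  assumes nz: "v \<noteq> 0"
  defines "L \<equiv> cmod v"
  defines "\<kappa> \<equiv> det2 v w / cmod v ^ 3"
  shows "lagrangian_deriv A u v w du dv dw / 2 =
      (complex_of_real ((1 + A * \<kappa>\<^sup>2) * L) * u) \<bullet> du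
    + (complex_of_real ((1 + A * \<kappa>\<^sup>2) / 2 * (cmod u)\<^sup>2 / L - 3 * A * (\<kappa> * (cmod u)\<^sup>2) * \<kappa> / L) * v
        - complex_of_real (A * (\<kappa> * (cmod u)\<^sup>2) / L\<^sup>2) * (\<i> * w)) \<bullet> dv
    + (complex_of_real (A * (\<kappa> * (cmod u)\<^sup>2) / L\<^sup>2) * (\<i> * v)) \<bullet> dw"
proof -
  have L: "L \<noteq> 0" using nz unfolding L_def by simp
  have sw: "det2 dw v = - det2 v dw" "det2 w dv = - det2 dv w"
    by (simp_all add: det2_def)
  have "det2 v w = \<kappa> * L ^ 3" unfolding \<kappa>_def L_def using nz by simp
  show ?thesis
    unfolding inner_diff_left inner_of_real_mult_left inner_ii_mult_left
    unfolding lagrangian_deriv_def L_def[symmetric] \<kappa>_def[symmetric] using L \<open>det2 v w = \<kappa> * L ^ 3\<close>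
    by (simp add: sw field_simps power2_eq_square power3_eq_cube)
qed

text \<open>Pointwise, this is \<open>coeff_dTh - (coeff_dTh2)\<^sub>\<theta> = - flux_theta\<close> (see below); it rests on the
  decomposition of \<open>w\<close> in the frame \<open>(v, \<i> v)\<close>:
  \<open>det2 v w \<cdot> v + \<bar>v\<bar>\<^sup>2 \<cdot> \<i> w = (v \<bullet> w) \<cdot> \<i> v\<close>.\<close>

lemma first_variation_theta_identity:
  fixes u v w :: complex and A W\<theta> :: real
  assumes nz: "v \<noteq> 0"
  defines "L \<equiv> cmod v"
  defines "\<kappa> \<equiv> det2 v w / cmod v ^ 3"
  defines "Wf \<equiv> \<kappa> * (cmod u)\<^sup>2"
  shows "(complex_of_real ((1 + A * \<kappa>\<^sup>2) / 2 * (cmod u)\<^sup>2 / L - 3 * A * Wf * \<kappa> / L) * v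
        - complex_of_real (A * Wf / L\<^sup>2) * (\<i> * w))
       - (complex_of_real (A * (W\<theta> * L\<^sup>2 - Wf * (2 * (v \<bullet> w))) / (L\<^sup>2 * L\<^sup>2)) * (\<i> * v)
          + complex_of_real (A * Wf / L\<^sup>2) * (\<i> * w))
     = - (complex_of_real ((-1 + A * \<kappa>\<^sup>2) / 2 * (cmod u)\<^sup>2 / L) * v
          + complex_of_real (A * W\<theta> / L\<^sup>2) * (\<i> * v))"
proof -
  have L: "L \<noteq> 0"
    using nz unfolding L_def by simp
  have L2: "L\<^sup>2 = (Re v)\<^sup>2 + (Im v)\<^sup>2" unfolding L_def by (simp add: cmod_power2)
  have "complex_of_real (det2 v w) * v + complex_of_real (L\<^sup>2) * (\<i> * w)
      - complex_of_real (v \<bullet> w) * (\<i> * v) = 0"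
    unfolding L2 by (simp add: complex_eq_iff det2_def inner_complex_def algebra_simps power2_eq_square)
  moreover have "det2 v w = \<kappa> * L ^ 3"
    unfolding \<kappa>_def L_def using nz by simp
  ultimately have "complex_of_real (\<kappa> * L ^ 3) * v + complex_of_real (L\<^sup>2) * (\<i> * w)
      - complex_of_real (v \<bullet> w) * (\<i> * v) = 0"
    by simp
  then have iw: "\<i> * w = (complex_of_real (v \<bullet> w) * (\<i> * v) - complex_of_real (\<kappa> * L ^ 3) * v)
      / complex_of_real (L\<^sup>2)"
    using L by (simp add: field_simps)
  show ?thesis
    unfolding iw Wf_def using L by (simp add: field_simps power2_eq_square power3_eq_cube)
qed

lemma continuous_on_lagrangian_deriv:
  fixes U V W dU dV dW :: "'a::topological_space \<Rightarrow> complex"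
  assumes "continuous_on T U" "continuous_on T V" "continuous_on T W"
    "continuous_on T dU" "continuous_on T dV" "continuous_on T dW"
    and nz: "\<And>z. z \<in> T \<Longrightarrow> V z \<noteq> 0"
  shows "continuous_on T (\<lambda>z. lagrangian_deriv A (U z) (V z) (W z) (dU z) (dV z) (dW z))"
  unfolding lagrangian_deriv_def det2_def using assms
  by (auto intro!: continuous_intros)

lemma continuous_on_lagrangian:
  fixes U V W :: "'a::topological_space \<Rightarrow> complex"
  assumes "continuous_on T U" "continuous_on T V" "continuous_on T W"
    and nz: "\<And>z. z \<in> T \<Longrightarrow> V z \<noteq> 0"
  shows "continuous_on T (\<lambda>z. lagrangian A (U z) (V z) (W z))"
  unfolding lagrangian_def det2_def using assms
  by (auto intro!: continuous_intros)

section \<open>Integration by parts on the period rectangle\<close>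

lemma integral_inner_by_parts:
  fixes F G :: "real \<Rightarrow> complex"
  assumes pq: "p \<le> q" and cF: "continuous_on {p..q} F" and cG: "continuous_on {p..q} G"
    and cG': "continuous_on {p..q} G'"
    and dF: "\<And>x. x \<in> {p<..<q} \<Longrightarrow> (F has_vector_derivative F' x) (at x)"
    and dG: "\<And>x. x \<in> {p<..<q} \<Longrightarrow> (G has_vector_derivative G' x) (at x)"
    and bd: "F q \<bullet> G q - F p \<bullet> G p = 0"
  shows "integral {p..q} (\<lambda>x. F' x \<bullet> G x) = - integral {p..q} (\<lambda>x. F x \<bullet> G' x)"
proof -
  have "(\<lambda>x. F x \<bullet> G' x) integrable_on {p..q}"
    using cF cG' by (auto intro!: integrable_continuous_interval continuous_intros)
  then have i: "((\<lambda>x. F x \<bullet> G' x) has_integral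
      (F q \<bullet> G q - F p \<bullet> G p - (- integral {p..q} (\<lambda>x. F x \<bullet> G' x)))) {p..q}"
    using bd by (simp add: has_integral_integral)
  have "((\<lambda>x. F' x \<bullet> G x) has_integral (- integral {p..q} (\<lambda>x. F x \<bullet> G' x))) {p..q}"
    by (rule integration_by_parts_interior[OF bounded_bilinear_inner pq cF cG dF dG i])
  then show ?thesis by (rule integral_unique)
qed

lemma integral_rect_iterated:
  fixes G :: "real \<times> real \<Rightarrow> real"
  assumes "continuous_on (rect a b) G"
  shows "integral (rect a b) G = integral {a..b} (\<lambda>t. integral {0..2*pi} (\<lambda>\<theta>. G (t, \<theta>)))"
  using integral_prod_continuous[of a 0 b "2*pi" G] assms by (simp add: cbox_interval)

lemma integral_rect_iterated_swap:
  fixes G :: "real \<times> real \<Rightarrow> real"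
  assumes "continuous_on (rect a b) G"
  shows "integral (rect a b) G = integral {0..2*pi} (\<lambda>\<theta>. integral {a..b} (\<lambda>t. G (t, \<theta>)))"
proof -
  have c: "continuous_on (rect a b) (\<lambda>(x, y). G (x, y))"
    using assms by simp
  show ?thesis
    using integral_rect_iterated[OF assms] integral_swap_continuous[OF c] by (simp add: cbox_interval)
qed

lemma continuous_on_rect_inner:
  fixes F G :: "real \<Rightarrow> real \<Rightarrow> complex"
  assumes "smooth_periodic a b F" and "smooth_periodic a b G"
  shows "continuous_on (rect a b) (\<lambda>x. F (fst x) (snd x) \<bullet> G (fst x) (snd x))"
  using assms by (intro continuous_intros smooth_periodic_continuous_on_rect)

lemma integrable_on_rect_inner:
  fixes F G :: "real \<Rightarrow> real \<Rightarrow> complex"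
  assumes "smooth_periodic a b F" and "smooth_periodic a b G"
  shows "(\<lambda>x. F (fst x) (snd x) \<bullet> G (fst x) (snd x)) integrable_on rect a b"
  using continuous_on_rect_inner[OF assms] by (rule integrable_continuous)

lemma integral_dTh_by_parts:
  fixes F G :: "real \<Rightarrow> real \<Rightarrow> complex"
  assumes ab: "a < b" and F: "smooth_periodic a b F" and G: "smooth_periodic a b G"
  shows "integral (rect a b) (\<lambda>x. dTh F (fst x) (snd x) \<bullet> G (fst x) (snd x))
    = - integral (rect a b) (\<lambda>x. F (fst x) (snd x) \<bullet> dTh G (fst x) (snd x))"
proof -
  have "integral {0..2*pi} (\<lambda>\<theta>. dTh F t \<theta> \<bullet> G t \<theta>) = - integral {0..2*pi} (\<lambda>\<theta>. F t \<theta> \<bullet> dTh G t \<theta>)"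
    if t: "t \<in> {a..b}" for t
  proof (rule integral_inner_by_parts)
    show "continuous_on {0..2 * pi} (F t)" "continuous_on {0..2 * pi} (G t)"
      "continuous_on {0..2 * pi} (dTh G t)"
      using smooth_periodic_continuous_in_theta[OF F t] smooth_periodic_continuous_in_theta[OF G t]
        smooth_periodic_continuous_in_theta[OF smooth_periodic_dTh[OF ab G] t]
      by simp_all
    show "(F t has_vector_derivative dTh F t x) (at x)" "(G t has_vector_derivative dTh G t x) (at x)" for x
      using smooth_periodic_has_vector_derivative_dTh[OF ab F t] smooth_periodic_has_vector_derivative_dTh[OF ab G t]
      by simp_all
    show "F t (2 * pi) \<bullet> G t (2 * pi) - F t 0 \<bullet> G t 0 = 0"
      using smooth_periodic_periodic[OF F t, of 0] smooth_periodic_periodic[OF G t, of 0] by simp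
  qed simp
  then have "integral {a..b} (\<lambda>t. integral {0..2*pi} (\<lambda>\<theta>. dTh F t \<theta> \<bullet> G t \<theta>))
      = integral {a..b} (\<lambda>t. - integral {0..2*pi} (\<lambda>\<theta>. F t \<theta> \<bullet> dTh G t \<theta>))"
    by (intro integral_cong) simp
  then show ?thesis
    unfolding integral_rect_iterated[OF continuous_on_rect_inner[OF smooth_periodic_dTh[OF ab F] G]]
      integral_rect_iterated[OF continuous_on_rect_inner[OF F smooth_periodic_dTh[OF ab G]]]
    by (simp add: integral_neg)
qed

lemma integral_dT_by_parts:
  fixes F G :: "real \<Rightarrow> real \<Rightarrow> complex"
  assumes ab: "a < b" and F: "smooth_periodic a b F" and G: "smooth_periodic a b G"
    and G_ends: "\<And>\<theta>. G a \<theta> = 0" "\<And>\<theta>. G b \<theta> = 0"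
  shows "integral (rect a b) (\<lambda>x. F (fst x) (snd x) \<bullet> dT a b G (fst x) (snd x))
    = - integral (rect a b) (\<lambda>x. dT a b F (fst x) (snd x) \<bullet> G (fst x) (snd x))"
proof -
  have interior: "(g has_vector_derivative D) (at t)"
    if "t \<in> {a<..<b}" and "(g has_vector_derivative D) (at t within {a..b})" for g D t
    using that at_within_interior[of t "{a..b}"] by simp
  have "integral {a..b} (\<lambda>t. dT a b F t \<theta> \<bullet> G t \<theta>) = - integral {a..b} (\<lambda>t. F t \<theta> \<bullet> dT a b G t \<theta>)" for \<theta>
  proof (rule integral_inner_by_parts)
    show "continuous_on {a..b} (\<lambda>t. F t \<theta>)" "continuous_on {a..b} (\<lambda>t. G t \<theta>)"
      "continuous_on {a..b} (\<lambda>t. dT a b G t \<theta>)"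
      by (intro smooth_periodic_continuous_in_t F G smooth_periodic_dT[OF ab G])+
    show "((\<lambda>t. F t \<theta>) has_vector_derivative dT a b F t \<theta>) (at t)"
      "((\<lambda>t. G t \<theta>) has_vector_derivative dT a b G t \<theta>) (at t)" if "t \<in> {a<..<b}" for t
      using that by (intro interior smooth_periodic_has_vector_derivative_dT[OF ab F]
          smooth_periodic_has_vector_derivative_dT[OF ab G]; simp)+
  qed (use ab G_ends in auto)
  then have "integral {0..2*pi} (\<lambda>\<theta>. integral {a..b} (\<lambda>t. F t \<theta> \<bullet> dT a b G t \<theta>))
      = integral {0..2*pi} (\<lambda>\<theta>. - integral {a..b} (\<lambda>t. dT a b F t \<theta> \<bullet> G t \<theta>))"
    by (intro integral_cong) (simp add: integral_neg)
  then show ?thesis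
    unfolding integral_rect_iterated_swap[OF continuous_on_rect_inner[OF F smooth_periodic_dT[OF ab G]]]
      integral_rect_iterated_swap[OF continuous_on_rect_inner[OF smooth_periodic_dT[OF ab F] G]]
    by (simp add: integral_neg)
qed

section \<open>The Euler--Lagrange residual\<close>

definition curv_kinetic :: "real \<Rightarrow> real \<Rightarrow> (real \<Rightarrow> real \<Rightarrow> complex) \<Rightarrow> real \<Rightarrow> real \<Rightarrow> real" where
  "curv_kinetic a b c t \<theta> = curv c t \<theta> * (cmod (dT a b c t \<theta>))\<^sup>2"

definition flux_t :: "real \<Rightarrow> real \<Rightarrow> real \<Rightarrow> (real \<Rightarrow> real \<Rightarrow> complex) \<Rightarrow> real \<Rightarrow> real \<Rightarrow> complex" where
  "flux_t A a b c t \<theta> = of_real ((1 + A * (curv c t \<theta>)\<^sup>2) * cmod (dTh c t \<theta>)) * dT a b c t \<theta>"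

definition flux_theta :: "real \<Rightarrow> real \<Rightarrow> real \<Rightarrow> (real \<Rightarrow> real \<Rightarrow> complex) \<Rightarrow> real \<Rightarrow> real \<Rightarrow> complex" where
  "flux_theta A a b c t \<theta> =
    of_real ((-1 + A * (curv c t \<theta>)\<^sup>2) / 2 * (cmod (dT a b c t \<theta>))\<^sup>2 / cmod (dTh c t \<theta>)) * dTh c t \<theta>
    + of_real (A * dTh (curv_kinetic a b c) t \<theta> / (cmod (dTh c t \<theta>))\<^sup>2) * (\<i> * dTh c t \<theta>)"

definition el_residual :: "real \<Rightarrow> real \<Rightarrow> real \<Rightarrow> (real \<Rightarrow> real \<Rightarrow> complex) \<Rightarrow> real \<Rightarrow> real \<Rightarrow> complex" where
  "el_residual A a b c t \<theta> = dT a b (flux_t A a b c) t \<theta> - dTh (flux_theta A a b c) t \<theta>"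

lemma geodesic_eq_iff_el_residual:
  "geodesic_eq A a b c \<longleftrightarrow> (\<forall>t\<in>{a..b}. \<forall>\<theta>. el_residual A a b c t \<theta> = 0)"
proof -
  have "flux_t A a b c = (\<lambda>t \<theta>. of_real ((1 + A * (curv c t \<theta>)\<^sup>2) * cmod (dTh c t \<theta>)) * dT a b c t \<theta>)"
    "curv_kinetic a b c = (\<lambda>t \<theta>. curv c t \<theta> * (cmod (dT a b c t \<theta>))\<^sup>2)"
    by (simp_all add: fun_eq_iff flux_t_def curv_kinetic_def)
  moreover have "flux_theta A a b c = (\<lambda>t \<theta>.
      of_real ((-1 + A * (curv c t \<theta>)\<^sup>2) / 2 * (cmod (dT a b c t \<theta>))\<^sup>2 / cmod (dTh c t \<theta>)) * dTh c t \<theta>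
      + of_real (A * dTh (curv_kinetic a b c) t \<theta> / (cmod (dTh c t \<theta>))\<^sup>2) * (\<i> * dTh c t \<theta>))"
    by (simp add: fun_eq_iff flux_theta_def)
  ultimately show ?thesis
    unfolding geodesic_eq_def el_residual_def by simp
qed

text \<open>The coefficients of \<open>h\<^sub>\<theta>\<close> and \<open>h\<^sub>\<theta>\<^sub>\<theta>\<close> in the first variation (that of \<open>h\<^sub>t\<close> is
  \<open>flux_t\<close>), and the \<open>\<theta>\<close>-derivative of the latter.\<close>

definition coeff_dTh :: "real \<Rightarrow> real \<Rightarrow> real \<Rightarrow> (real \<Rightarrow> real \<Rightarrow> complex) \<Rightarrow> real \<Rightarrow> real \<Rightarrow> complex" where
  "coeff_dTh A a b c t \<theta> =
    of_real ((1 + A * (curv c t \<theta>)\<^sup>2) / 2 * (cmod (dT a b c t \<theta>))\<^sup>2 / cmod (dTh c t \<theta>)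
      - 3 * A * curv_kinetic a b c t \<theta> * curv c t \<theta> / cmod (dTh c t \<theta>)) * dTh c t \<theta>
    - of_real (A * curv_kinetic a b c t \<theta> / (cmod (dTh c t \<theta>))\<^sup>2) * (\<i> * dTh (dTh c) t \<theta>)"

definition coeff_dTh2 :: "real \<Rightarrow> real \<Rightarrow> real \<Rightarrow> (real \<Rightarrow> real \<Rightarrow> complex) \<Rightarrow> real \<Rightarrow> real \<Rightarrow> complex" where
  "coeff_dTh2 A a b c t \<theta> = of_real (A * curv_kinetic a b c t \<theta> / (cmod (dTh c t \<theta>))\<^sup>2) * (\<i> * dTh c t \<theta>)"

definition coeff_dTh2_dTh ::
    "real \<Rightarrow> real \<Rightarrow> real \<Rightarrow> (real \<Rightarrow> real \<Rightarrow> complex) \<Rightarrow> real \<Rightarrow> real \<Rightarrow> complex" where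
  "coeff_dTh2_dTh A a b c t \<theta> =
    of_real (A * (dTh (curv_kinetic a b c) t \<theta> * (cmod (dTh c t \<theta>))\<^sup>2
        - curv_kinetic a b c t \<theta> * (2 * (dTh c t \<theta> \<bullet> dTh (dTh c) t \<theta>)))
      / ((cmod (dTh c t \<theta>))\<^sup>2 * (cmod (dTh c t \<theta>))\<^sup>2)) * (\<i> * dTh c t \<theta>)
    + of_real (A * curv_kinetic a b c t \<theta> / (cmod (dTh c t \<theta>))\<^sup>2) * (\<i> * dTh (dTh c) t \<theta>)"

locale path_of_immersions =
  fixes A a b :: real and c :: "real \<Rightarrow> real \<Rightarrow> complex"
  assumes ab: "a < b" and smooth_path: "smooth_path a b c" and immersion: "immersion_path a b c"
begin

lemma smooth_periodic_c: "smooth_periodic a b c"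
  by (rule smooth_path_imp_smooth_periodic[OF smooth_path])

lemma smooth_periodic_ct: "smooth_periodic a b (dT a b c)"
  by (rule smooth_periodic_dT[OF ab smooth_periodic_c])

lemma smooth_periodic_cth: "smooth_periodic a b (dTh c)"
  by (rule smooth_periodic_dTh[OF ab smooth_periodic_c])

lemma smooth_periodic_cthth: "smooth_periodic a b (dTh (dTh c))"
  by (rule smooth_periodic_dTh[OF ab smooth_periodic_cth])

lemma cth_nonzero: "t \<in> {a..b} \<Longrightarrow> dTh c t \<theta> \<noteq> 0"
  using immersion unfolding immersion_path_def by blast

lemma cth_nonzero_strip: "x \<in> strip a b \<Longrightarrow> dTh c (fst x) (snd x) \<noteq> 0"
  using cth_nonzero by (auto simp: mem_Times_iff)

lemma smooth_on_norm_cth: "smooth_on (strip a b) (\<lambda>x. cmod (dTh c (fst x) (snd x)))"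
  by (rule smooth_on_cmod[OF smooth_periodic_smooth_on[OF smooth_periodic_cth] cth_nonzero_strip])

lemmas smooth_on_c_derivatives =
  smooth_periodic_smooth_on[OF smooth_periodic_ct] smooth_periodic_smooth_on[OF smooth_periodic_cth]
  smooth_periodic_smooth_on[OF smooth_periodic_cthth] smooth_on_norm_cth

lemmas periodic_c_derivatives =
  smooth_periodic_periodic[OF smooth_periodic_ct] smooth_periodic_periodic[OF smooth_periodic_cth]
  smooth_periodic_periodic[OF smooth_periodic_cthth]

lemma smooth_periodic_curv: "smooth_periodic a b (curv c)"
  unfolding smooth_periodic_def
proof
  have "(\<lambda>x. curv c (fst x) (snd x)) = (\<lambda>x. (Re (dTh c (fst x) (snd x)) * Im (dTh (dTh c) (fst x) (snd x))
      - Im (dTh c (fst x) (snd x)) * Re (dTh (dTh c) (fst x) (snd x))) * inverse (cmod (dTh c (fst x) (snd x)) ^ 3))"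
    by (simp add: curv_def det2_def divide_inverse)
  then show "smooth_on (strip a b) (\<lambda>x. curv c (fst x) (snd x))"
    using cth_nonzero_strip
    by (simp only:) (intro smooth_on_mult smooth_on_diff smooth_on_Re smooth_on_Im smooth_on_inverse
        smooth_on_power smooth_on_c_derivatives; simp)
  show "\<forall>t\<in>{a..b}. \<forall>\<theta>. curv c t (\<theta> + 2 * pi) = curv c t \<theta>"
    using periodic_c_derivatives by (simp add: curv_def)
qed

lemma smooth_periodic_curv_kinetic: "smooth_periodic a b (curv_kinetic a b c)"
  unfolding smooth_periodic_def
proof
  show "smooth_on (strip a b) (\<lambda>x. curv_kinetic a b c (fst x) (snd x))"
    unfolding curv_kinetic_def cmod_power2
    by (intro smooth_on_mult smooth_on_add smooth_on_power smooth_on_Re smooth_on_Im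
        smooth_periodic_smooth_on[OF smooth_periodic_curv] smooth_on_c_derivatives)
  show "\<forall>t\<in>{a..b}. \<forall>\<theta>. curv_kinetic a b c t (\<theta> + 2 * pi) = curv_kinetic a b c t \<theta>"
    using smooth_periodic_periodic[OF smooth_periodic_curv] periodic_c_derivatives
    by (simp add: curv_kinetic_def)
qed

lemma smooth_periodic_curv_kinetic_dTh: "smooth_periodic a b (dTh (curv_kinetic a b c))"
  by (rule smooth_periodic_dTh[OF ab smooth_periodic_curv_kinetic])

lemma smooth_periodic_flux_t: "smooth_periodic a b (flux_t A a b c)"
  unfolding smooth_periodic_def
proof
  show "smooth_on (strip a b) (\<lambda>x. flux_t A a b c (fst x) (snd x))"
    unfolding flux_t_def
    by (intro smooth_on_mult smooth_on_add smooth_on_power smooth_on_of_real smooth_on_const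
        smooth_periodic_smooth_on[OF smooth_periodic_curv] smooth_on_c_derivatives)
  show "\<forall>t\<in>{a..b}. \<forall>\<theta>. flux_t A a b c t (\<theta> + 2 * pi) = flux_t A a b c t \<theta>"
    using smooth_periodic_periodic[OF smooth_periodic_curv] periodic_c_derivatives
    by (simp add: flux_t_def)
qed

lemma smooth_periodic_flux_theta: "smooth_periodic a b (flux_theta A a b c)"
  unfolding smooth_periodic_def
proof
  show "smooth_on (strip a b) (\<lambda>x. flux_theta A a b c (fst x) (snd x))"
    unfolding flux_theta_def divide_inverse cmod_power2[of "dT a b c _ _"]
    using cth_nonzero_strip
    by (intro smooth_on_mult smooth_on_add smooth_on_power smooth_on_of_real smooth_on_const
        smooth_on_Re smooth_on_Im smooth_on_inverse smooth_periodic_smooth_on[OF smooth_periodic_curv]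
        smooth_periodic_smooth_on[OF smooth_periodic_curv_kinetic_dTh] smooth_on_c_derivatives) auto
  show "\<forall>t\<in>{a..b}. \<forall>\<theta>. flux_theta A a b c t (\<theta> + 2 * pi) = flux_theta A a b c t \<theta>"
    using smooth_periodic_periodic[OF smooth_periodic_curv] periodic_c_derivatives
      smooth_periodic_periodic[OF smooth_periodic_curv_kinetic_dTh]
    by (simp add: flux_theta_def)
qed

lemma smooth_periodic_el_residual: "smooth_periodic a b (el_residual A a b c)"
  unfolding smooth_periodic_def
proof
  show "smooth_on (strip a b) (\<lambda>x. el_residual A a b c (fst x) (snd x))"
    unfolding el_residual_def
    by (intro smooth_on_diff smooth_periodic_smooth_on smooth_periodic_dT smooth_periodic_dTh ab
        smooth_periodic_flux_t smooth_periodic_flux_theta)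
  show "\<forall>t\<in>{a..b}. \<forall>\<theta>. el_residual A a b c t (\<theta> + 2 * pi) = el_residual A a b c t \<theta>"
    using smooth_periodic_periodic[OF smooth_periodic_dT[OF ab smooth_periodic_flux_t]]
      smooth_periodic_periodic[OF smooth_periodic_dTh[OF ab smooth_periodic_flux_theta]]
    by (simp add: el_residual_def)
qed

lemma smooth_periodic_coeff_dTh2: "smooth_periodic a b (coeff_dTh2 A a b c)"
  unfolding smooth_periodic_def
proof
  show "smooth_on (strip a b) (\<lambda>x. coeff_dTh2 A a b c (fst x) (snd x))"
    unfolding coeff_dTh2_def divide_inverse
    using cth_nonzero_strip
    by (intro smooth_on_mult smooth_on_power smooth_on_of_real smooth_on_const smooth_on_inverse
        smooth_periodic_smooth_on[OF smooth_periodic_curv_kinetic] smooth_on_c_derivatives) auto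
  show "\<forall>t\<in>{a..b}. \<forall>\<theta>. coeff_dTh2 A a b c t (\<theta> + 2 * pi) = coeff_dTh2 A a b c t \<theta>"
    using periodic_c_derivatives smooth_periodic_periodic[OF smooth_periodic_curv_kinetic]
    by (simp add: coeff_dTh2_def)
qed

lemma has_vector_derivative_coeff_dTh2:
  assumes t: "t \<in> {a..b}"
  shows "((\<lambda>\<phi>. coeff_dTh2 A a b c t \<phi>) has_vector_derivative coeff_dTh2_dTh A a b c t \<theta>) (at \<theta>)"
proof -
  have dv: "((\<lambda>\<phi>. dTh c t \<phi>) has_vector_derivative dTh (dTh c) t \<theta>) (at \<theta>)"
    by (rule smooth_periodic_has_vector_derivative_dTh[OF ab smooth_periodic_cth t])
  have dW: "((\<lambda>\<phi>. curv_kinetic a b c t \<phi>) has_real_derivative dTh (curv_kinetic a b c) t \<theta>) (at \<theta>)"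
    unfolding has_real_derivative_iff_has_vector_derivative
    by (rule smooth_periodic_has_vector_derivative_dTh[OF ab smooth_periodic_curv_kinetic t])
  have dL: "((\<lambda>\<phi>. (cmod (dTh c t \<phi>))\<^sup>2) has_real_derivative 2 * (dTh c t \<theta> \<bullet> dTh (dTh c) t \<theta>)) (at \<theta>)"
    unfolding cmod_power2 inner_complex_def
    by (rule DERIV_cong[OF DERIV_add[OF DERIV_power[OF has_field_derivative_Re[OF dv]]
          DERIV_power[OF has_field_derivative_Im[OF dv]]]]) (simp add: algebra_simps)
  have "(cmod (dTh c t \<theta>))\<^sup>2 \<noteq> 0"
    using cth_nonzero[OF t] by simp
  then have "((\<lambda>\<phi>. A * curv_kinetic a b c t \<phi> / (cmod (dTh c t \<phi>))\<^sup>2) has_real_derivative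
      A * (dTh (curv_kinetic a b c) t \<theta> * (cmod (dTh c t \<theta>))\<^sup>2
        - curv_kinetic a b c t \<theta> * (2 * (dTh c t \<theta> \<bullet> dTh (dTh c) t \<theta>)))
      / ((cmod (dTh c t \<theta>))\<^sup>2 * (cmod (dTh c t \<theta>))\<^sup>2)) (at \<theta>)"
    by (rule DERIV_cong[OF DERIV_divide[OF DERIV_cmult[OF dW] dL]]) (simp add: algebra_simps)
  from has_vector_derivative_mult[OF has_vector_derivative_of_real[OF this]
      has_vector_derivative_mult_right[OF dv]]
  show ?thesis
    unfolding coeff_dTh2_def coeff_dTh2_dTh_def by (rule has_vector_derivative_eq_rhs) (simp add: add.commute)
qed

lemma coeff_dTh_eq:
  assumes t: "t \<in> {a..b}"
  shows "coeff_dTh A a b c t \<theta> = dTh (coeff_dTh2 A a b c) t \<theta> - flux_theta A a b c t \<theta>"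
proof -
  have "dTh (coeff_dTh2 A a b c) t \<theta> = coeff_dTh2_dTh A a b c t \<theta>"
    unfolding dTh_def using has_vector_derivative_coeff_dTh2[OF t] vector_derivative_at by blast
  moreover have "coeff_dTh A a b c t \<theta> - coeff_dTh2_dTh A a b c t \<theta> = - flux_theta A a b c t \<theta>"
    using first_variation_theta_identity[where u = "dT a b c t \<theta>" and w = "dTh (dTh c) t \<theta>" and A = A
        and ?W\<theta> = "dTh (curv_kinetic a b c) t \<theta>", OF cth_nonzero[OF t]]
    unfolding coeff_dTh_def coeff_dTh2_dTh_def flux_theta_def curv_kinetic_def curv_def .
  ultimately show ?thesis
    by (simp add: algebra_simps)
qed

end

section \<open>The first variation\<close>

locale variation = path_of_immersions +
  fixes h :: "real \<Rightarrow> real \<Rightarrow> complex"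
  assumes admissible: "admissible_variation a b h"
begin

abbreviation "c_t x \<equiv> dT a b c (fst x) (snd x)"
abbreviation "c_th x \<equiv> dTh c (fst x) (snd x)"
abbreviation "c_thth x \<equiv> dTh (dTh c) (fst x) (snd x)"
abbreviation "h_t x \<equiv> dT a b h (fst x) (snd x)"
abbreviation "h_th x \<equiv> dTh h (fst x) (snd x)"
abbreviation "h_thth x \<equiv> dTh (dTh h) (fst x) (snd x)"

lemma smooth_periodic_h: "smooth_periodic a b h"
  using admissible smooth_path_imp_smooth_periodic unfolding admissible_variation_def by blast

lemma h_endpoints: "h a \<theta> = 0" "h b \<theta> = 0"
  using admissible unfolding admissible_variation_def by auto

lemma smooth_periodic_ht: "smooth_periodic a b (dT a b h)"
  by (rule smooth_periodic_dT[OF ab smooth_periodic_h])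

lemma smooth_periodic_hth: "smooth_periodic a b (dTh h)"
  by (rule smooth_periodic_dTh[OF ab smooth_periodic_h])

lemma smooth_periodic_hthth: "smooth_periodic a b (dTh (dTh h))"
  by (rule smooth_periodic_dTh[OF ab smooth_periodic_hth])

lemmas continuous_on_rect_derivatives =
  smooth_periodic_continuous_on_rect[OF smooth_periodic_ct] smooth_periodic_continuous_on_rect[OF smooth_periodic_cth]
  smooth_periodic_continuous_on_rect[OF smooth_periodic_cthth] smooth_periodic_continuous_on_rect[OF smooth_periodic_ht]
  smooth_periodic_continuous_on_rect[OF smooth_periodic_hth] smooth_periodic_continuous_on_rect[OF smooth_periodic_hthth]

lemma dT_variation:
  assumes t: "t \<in> {a..b}"
  shows "dT a b (\<lambda>t \<theta>. c t \<theta> + of_real s * h t \<theta>) t \<theta> = dT a b c t \<theta> + of_real s * dT a b h t \<theta>"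
proof -
  have "((\<lambda>t. c t \<theta> + of_real s * h t \<theta>) has_vector_derivative dT a b c t \<theta> + of_real s * dT a b h t \<theta>)
      (at t within {a..b})"
    by (intro has_vector_derivative_add has_vector_derivative_mult_right
        smooth_periodic_has_vector_derivative_dT[OF ab _ t] smooth_periodic_c smooth_periodic_h)
  then show ?thesis
    using vector_derivative_within_cbox[OF ab, of t] t by (simp add: dT_def cbox_interval)
qed

lemma dTh_variation:
  assumes t: "t \<in> {a..b}"
  shows "dTh (\<lambda>t \<theta>. c t \<theta> + of_real s * h t \<theta>) t \<theta> = dTh c t \<theta> + of_real s * dTh h t \<theta>"
proof -
  have "((\<lambda>\<phi>. c t \<phi> + of_real s * h t \<phi>) has_vector_derivative dTh c t \<theta> + of_real s * dTh h t \<theta>) (at \<theta>)"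
    by (intro has_vector_derivative_add has_vector_derivative_mult_right
        smooth_periodic_has_vector_derivative_dTh[OF ab _ t] smooth_periodic_c smooth_periodic_h)
  then show ?thesis
    unfolding dTh_def using vector_derivative_at by blast
qed

lemma dTh_dTh_variation:
  assumes t: "t \<in> {a..b}"
  shows "dTh (dTh (\<lambda>t \<theta>. c t \<theta> + of_real s * h t \<theta>)) t \<theta> = dTh (dTh c) t \<theta> + of_real s * dTh (dTh h) t \<theta>"
proof -
  have "((\<lambda>\<phi>. dTh c t \<phi> + of_real s * dTh h t \<phi>) has_vector_derivative
      dTh (dTh c) t \<theta> + of_real s * dTh (dTh h) t \<theta>) (at \<theta>)"
    by (intro has_vector_derivative_add has_vector_derivative_mult_right
        smooth_periodic_has_vector_derivative_dTh[OF ab _ t] smooth_periodic_cth smooth_periodic_hth)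
  then show ?thesis
    unfolding dTh_def[of "dTh (\<lambda>t \<theta>. c t \<theta> + of_real s * h t \<theta>)"] dTh_variation[OF t]
    using vector_derivative_at by (metis dTh_def)
qed

lemma cth_variation_nonzero:
  obtains \<epsilon> :: real where "\<epsilon> > 0"
    and "\<And>s x. \<bar>s\<bar> \<le> \<epsilon> \<Longrightarrow> x \<in> rect a b \<Longrightarrow> c_th x + of_real s * h_th x \<noteq> 0"
proof -
  have rect_nonempty: "rect a b \<noteq> {}"
    using ab by (simp add: cbox_Pair_eq cbox_interval)
  have "continuous_on (rect a b) (\<lambda>x. cmod (c_th x))"
    by (intro continuous_intros smooth_periodic_continuous_on_rect smooth_periodic_cth)
  then obtain x0 where x0: "x0 \<in> rect a b" "\<And>y. y \<in> rect a b \<Longrightarrow> cmod (c_th x0) \<le> cmod (c_th y)"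
    using continuous_attains_inf[OF compact_cbox rect_nonempty] by blast
  have "continuous_on (rect a b) (\<lambda>x. cmod (h_th x))"
    by (intro continuous_intros smooth_periodic_continuous_on_rect smooth_periodic_hth)
  then obtain x1 where x1: "\<And>y. y \<in> rect a b \<Longrightarrow> cmod (h_th y) \<le> cmod (h_th x1)"
    using continuous_attains_sup[OF compact_cbox rect_nonempty] by blast
  define m where "m = cmod (c_th x0)"
  define M where "M = cmod (h_th x1)"
  have m: "m > 0"
    unfolding m_def using cth_nonzero_strip[OF subsetD[OF rect_subset_strip x0(1)]] by simp
  have M: "M \<ge> 0"
    unfolding M_def by simp
  show ?thesis
  proof
    show "m / (2 * (M + 1)) > 0"
      using m M by simp
    fix s x assume s: "\<bar>s\<bar> \<le> m / (2 * (M + 1))" and x: "x \<in> rect a b"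
    have "\<bar>s\<bar> * cmod (h_th x) \<le> m / (2 * (M + 1)) * M"
      using s x1[OF x] M unfolding M_def by (intro mult_mono) auto
    also have "\<dots> < m"
      using m M by (simp add: field_simps) (smt (verit) mult_nonneg_nonneg)
    also have "m \<le> cmod (c_th x)"
      using x0(2)[OF x] unfolding m_def .
    finally have "cmod (of_real s * h_th x) < cmod (c_th x)"
      by (simp add: norm_mult)
    then show "c_th x + of_real s * h_th x \<noteq> 0"
      by (metis add_eq_0_iff norm_minus_cancel order_less_irrefl)
  qed
qed

lemma energy_variation_eq_integral:
  assumes nz: "\<And>x. x \<in> rect a b \<Longrightarrow> c_th x + of_real s * h_th x \<noteq> 0"
  shows "energy A a b (\<lambda>t \<theta>. c t \<theta> + of_real s * h t \<theta>) = 1/2 * integral (rect a b)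
    (\<lambda>x. lagrangian A (c_t x + of_real s * h_t x) (c_th x + of_real s * h_th x) (c_thth x + of_real s * h_thth x))"
proof -
  have cont: "continuous_on (rect a b)
      (\<lambda>x. lagrangian A (c_t x + of_real s * h_t x) (c_th x + of_real s * h_th x) (c_thth x + of_real s * h_thth x))"
    using nz by (intro continuous_on_lagrangian continuous_intros continuous_on_rect_derivatives)
  have "integral (rect a b)
      (\<lambda>x. lagrangian A (c_t x + of_real s * h_t x) (c_th x + of_real s * h_th x) (c_thth x + of_real s * h_thth x))
    = integral {a..b} (\<lambda>t. integral {0..2*pi} (\<lambda>\<theta>. (1 + A * (curv (\<lambda>t \<theta>. c t \<theta> + of_real s * h t \<theta>) t \<theta>)\<^sup>2)
        * (cmod (dT a b (\<lambda>t \<theta>. c t \<theta> + of_real s * h t \<theta>) t \<theta>))\<^sup>2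
        * cmod (dTh (\<lambda>t \<theta>. c t \<theta> + of_real s * h t \<theta>) t \<theta>)))"
    unfolding integral_rect_iterated[OF cont]
    by (intro integral_cong) (simp add: lagrangian_def curv_def dT_variation dTh_variation dTh_dTh_variation)
  then show ?thesis
    unfolding energy_def by simp
qed

lemma has_real_derivative_energy_variation:
  "((\<lambda>s. energy A a b (\<lambda>t \<theta>. c t \<theta> + of_real s * h t \<theta>)) has_real_derivative
    1/2 * integral (rect a b) (\<lambda>x. lagrangian_deriv A (c_t x) (c_th x) (c_thth x) (h_t x) (h_th x) (h_thth x)))
    (at 0)"
proof -
  obtain \<epsilon> :: real where \<epsilon>: "\<epsilon> > 0"
    and nz0: "\<And>s x. \<bar>s\<bar> \<le> \<epsilon> \<Longrightarrow> x \<in> rect a b \<Longrightarrow> c_th x + of_real s * h_th x \<noteq> 0"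
    using cth_variation_nonzero by blast
  define U where "U = cball (0::real) \<epsilon>"
  have nz: "c_th x + of_real s * h_th x \<noteq> 0" if "s \<in> U" "x \<in> rect a b" for s x
    using nz0 that unfolding U_def mem_cball dist_0_norm by auto
  define f where "f s x = lagrangian A (c_t x + of_real s * h_t x) (c_th x + of_real s * h_th x)
    (c_thth x + of_real s * h_thth x)" for s x
  define f' where "f' s x = lagrangian_deriv A (c_t x + of_real s * h_t x) (c_th x + of_real s * h_th x)
    (c_thth x + of_real s * h_thth x) (h_t x) (h_th x) (h_thth x)" for s x
  have cont_snd: "continuous_on (U \<times> rect a b) (\<lambda>z. g (fst (snd z)) (snd (snd z)))"
    if "smooth_periodic a b g" for g :: "real \<Rightarrow> real \<Rightarrow> complex"
  proof -
    have "continuous_on (U \<times> rect a b) (\<lambda>z. (\<lambda>x. g (fst x) (snd x)) (snd z))"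
      by (rule continuous_on_compose2[OF smooth_periodic_continuous_on_rect[OF that] continuous_on_snd]) auto
    then show ?thesis by simp
  qed
  have "((\<lambda>s. integral (rect a b) (f s)) has_field_derivative integral (rect a b) (f' 0)) (at 0 within U)"
  proof (rule leibniz_rule_field_derivative)
    show "((\<lambda>s. f s x) has_field_derivative f' s x) (at s within U)" if "s \<in> U" "x \<in> rect a b" for s x
      unfolding f_def f'_def by (rule has_real_derivative_lagrangian_line[OF nz[OF that]])
    show "f s integrable_on rect a b" if "s \<in> U" for s
    proof (rule integrable_continuous)
      show "continuous_on (rect a b) (f s)"
        unfolding f_def
        by (rule continuous_on_lagrangian) (use nz that in \<open>auto intro!: continuous_intros
            continuous_on_rect_derivatives\<close>)
    qed
    show "continuous_on (U \<times> rect a b) (\<lambda>(s, x). f' s x)"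
      unfolding case_prod_unfold f'_def
      by (rule continuous_on_lagrangian_deriv) (use nz in \<open>auto intro!: continuous_intros cont_snd
          smooth_periodic_ct smooth_periodic_ht smooth_periodic_cth smooth_periodic_hth smooth_periodic_cthth
          smooth_periodic_hthth\<close>)
  qed (auto simp: U_def \<epsilon> less_imp_le)
  moreover have "at 0 within U = at 0"
    using \<epsilon> unfolding U_def by (intro at_within_interior) simp
  ultimately have "((\<lambda>s. integral (rect a b) (f s)) has_field_derivative integral (rect a b) (f' 0)) (at 0)"
    by simp
  then have D: "((\<lambda>s. 1/2 * integral (rect a b) (f s)) has_field_derivative 1/2 * integral (rect a b) (f' 0))
      (at 0)"
    by (rule DERIV_cmult)
  have E: "energy A a b (\<lambda>t \<theta>. c t \<theta> + of_real s * h t \<theta>) = 1/2 * integral (rect a b) (f s)"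
    if "s \<in> ball 0 \<epsilon>" for s
  proof -
    have "s \<in> U"
      using that unfolding U_def by auto
    then show ?thesis
      unfolding f_def by (intro energy_variation_eq_integral nz)
  qed
  have f'_0: "f' 0 = (\<lambda>x. lagrangian_deriv A (c_t x) (c_th x) (c_thth x) (h_t x) (h_th x) (h_thth x))"
    unfolding f'_def by simp
  show ?thesis
    unfolding f'_0[symmetric]
    by (rule has_field_derivative_transform_within_open[OF D, where S = "ball 0 \<epsilon>"]) (use \<epsilon> E in auto)
qed

lemma lagrangian_deriv_eq_fluxes:
  assumes "x \<in> strip a b"
  shows "lagrangian_deriv A (c_t x) (c_th x) (c_thth x) (h_t x) (h_th x) (h_thth x) / 2
    = flux_t A a b c (fst x) (snd x) \<bullet> h_t x
      + (dTh (coeff_dTh2 A a b c) (fst x) (snd x) \<bullet> h_th x + coeff_dTh2 A a b c (fst x) (snd x) \<bullet> h_thth x)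
      - flux_theta A a b c (fst x) (snd x) \<bullet> h_th x"
proof -
  obtain t \<theta> where x: "x = (t, \<theta>)" and t: "t \<in> {a..b}"
    using assms by (cases x) auto
  have "lagrangian_deriv A (c_t x) (c_th x) (c_thth x) (h_t x) (h_th x) (h_thth x) / 2
    = flux_t A a b c t \<theta> \<bullet> dT a b h t \<theta> + coeff_dTh A a b c t \<theta> \<bullet> dTh h t \<theta>
      + coeff_dTh2 A a b c t \<theta> \<bullet> dTh (dTh h) t \<theta>"
    unfolding flux_t_def coeff_dTh_def coeff_dTh2_def curv_kinetic_def curv_def x fst_conv snd_conv
    by (rule lagrangian_deriv_eq_inner[OF cth_nonzero[OF t]])
  then show ?thesis
    unfolding x fst_conv snd_conv coeff_dTh_eq[OF t] inner_diff_left by simp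
qed

text \<open>The \<open>h\<^sub>\<theta>\<^sub>\<theta>\<close>-term combines with part of the \<open>h\<^sub>\<theta>\<close>-term into a \<open>\<theta>\<close>-derivative,
  whose integral vanishes by periodicity.\<close>

lemma first_variation_integral:
  "1/2 * integral (rect a b) (\<lambda>x. lagrangian_deriv A (c_t x) (c_th x) (c_thth x) (h_t x) (h_th x) (h_thth x))
    = - integral (rect a b) (\<lambda>x. el_residual A a b c (fst x) (snd x) \<bullet> h (fst x) (snd x))"
proof -
  let ?X = "flux_t A a b c" and ?Y = "flux_theta A a b c" and ?Z = "coeff_dTh2 A a b c"
  note int = integrable_on_rect_inner
  note sp = smooth_periodic_flux_t smooth_periodic_flux_theta smooth_periodic_coeff_dTh2
    smooth_periodic_dTh[OF ab smooth_periodic_coeff_dTh2] smooth_periodic_dT[OF ab smooth_periodic_flux_t]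
    smooth_periodic_dTh[OF ab smooth_periodic_flux_theta]
    smooth_periodic_h smooth_periodic_ht smooth_periodic_hth smooth_periodic_hthth
  have "1/2 * integral (rect a b) (\<lambda>x. lagrangian_deriv A (c_t x) (c_th x) (c_thth x) (h_t x) (h_th x) (h_thth x))
      = integral (rect a b) (\<lambda>x. lagrangian_deriv A (c_t x) (c_th x) (c_thth x) (h_t x) (h_th x) (h_thth x) / 2)"
    by (simp add: integral_mult_right[symmetric] field_simps)
  also have "\<dots> = integral (rect a b) (\<lambda>x. ?X (fst x) (snd x) \<bullet> h_t x
      + (dTh ?Z (fst x) (snd x) \<bullet> h_th x + ?Z (fst x) (snd x) \<bullet> h_thth x) - ?Y (fst x) (snd x) \<bullet> h_th x)"
    using rect_subset_strip by (intro integral_cong lagrangian_deriv_eq_fluxes) blast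
  also have "\<dots> = integral (rect a b) (\<lambda>x. ?X (fst x) (snd x) \<bullet> h_t x)
      + (integral (rect a b) (\<lambda>x. dTh ?Z (fst x) (snd x) \<bullet> h_th x)
        + integral (rect a b) (\<lambda>x. ?Z (fst x) (snd x) \<bullet> h_thth x))
      - integral (rect a b) (\<lambda>x. ?Y (fst x) (snd x) \<bullet> h_th x)"
    using int[OF sp(1) sp(8)] int[OF sp(4) sp(9)] int[OF sp(3) sp(10)] int[OF sp(2) sp(9)]
    by (simp add: integral_add integral_diff integrable_add integrable_diff)
  also have "\<dots> = - integral (rect a b) (\<lambda>x. dT a b ?X (fst x) (snd x) \<bullet> h (fst x) (snd x))
      + integral (rect a b) (\<lambda>x. dTh ?Y (fst x) (snd x) \<bullet> h (fst x) (snd x))"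
    using integral_dT_by_parts[OF ab smooth_periodic_flux_t smooth_periodic_h h_endpoints]
      integral_dTh_by_parts[OF ab smooth_periodic_coeff_dTh2 smooth_periodic_hth]
      integral_dTh_by_parts[OF ab smooth_periodic_flux_theta smooth_periodic_h]
    by simp
  also have "\<dots> = - integral (rect a b) (\<lambda>x. el_residual A a b c (fst x) (snd x) \<bullet> h (fst x) (snd x))"
    unfolding el_residual_def inner_diff_left using int[OF sp(5) sp(7)] int[OF sp(6) sp(7)]
    by (simp add: integral_diff)
  finally show ?thesis .
qed

end

lemma (in path_of_immersions) first_variation:
  assumes "admissible_variation a b h"
  shows "((\<lambda>s. energy A a b (\<lambda>t \<theta>. c t \<theta> + of_real s * h t \<theta>)) has_real_derivative
    - integral (rect a b) (\<lambda>x. el_residual A a b c (fst x) (snd x) \<bullet> h (fst x) (snd x))) (at 0)"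
proof -
  interpret variation A a b c h
    by unfold_locales (rule assms)
  show ?thesis
    using has_real_derivative_energy_variation first_variation_integral by simp
qed

section \<open>The fundamental lemma of the calculus of variations\<close>

lemma admissible_variation_bump:
  fixes R :: "real \<Rightarrow> real \<Rightarrow> complex"
  assumes R: "smooth_periodic a b R"
  shows "admissible_variation a b (\<lambda>t \<theta>. of_real ((t - a) * (b - t)) * R t \<theta>)"
proof -
  have "smooth_on (strip a b) (\<lambda>x. of_real ((fst x - a) * (b - fst x)) * R (fst x) (snd x))"
    by (intro smooth_on_mult smooth_on_of_real smooth_on_diff smooth_on_fst smooth_on_const
        smooth_periodic_smooth_on[OF R])
  then show ?thesis
    unfolding admissible_variation_def smooth_path_def
    using smooth_periodic_periodic[OF R] by (simp add: case_prod_unfold)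
qed

lemma inner_of_real_mult_right: "z \<bullet> (complex_of_real r * w) = r * (z \<bullet> w)"
  by (simp add: inner_complex_def algebra_simps)

lemma smooth_periodic_eq_0_if_orthogonal:
  fixes R :: "real \<Rightarrow> real \<Rightarrow> complex"
  assumes ab: "a < b" and R: "smooth_periodic a b R"
    and orth: "\<And>h. admissible_variation a b h \<Longrightarrow>
      integral (rect a b) (\<lambda>x. R (fst x) (snd x) \<bullet> h (fst x) (snd x)) = 0"
    and t: "t \<in> {a..b}"
  shows "R t \<theta> = 0"
proof -
  define f where "f x = (fst x - a) * (b - fst x) * (cmod (R (fst x) (snd x)))\<^sup>2" for x
  have cont: "continuous_on (rect a b) f"
    unfolding f_def by (intro continuous_intros smooth_periodic_continuous_on_rect[OF R])
  have "integral (rect a b) f = 0"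
    using orth[OF admissible_variation_bump[OF R]]
    unfolding f_def inner_of_real_mult_right power2_norm_eq_inner .
  then have "(f has_integral 0) (rect a b)"
    using integrable_continuous[OF cont] has_integral_integral by metis
  moreover have "((a + b) / 2, pi) \<in> box (a, 0) (b, 2 * pi)"
    using ab by (simp add: box_prod box_real)
  then have "box (a, 0) (b, 2 * pi) \<noteq> {}"
    by blast
  moreover have "0 \<le> f x" if "x \<in> box (a, 0) (b, 2 * pi)" for x
    using that unfolding f_def by (auto simp: box_prod box_real)
  ultimately have f_0: "f x = 0" if "x \<in> rect a b" for x
    using has_integral_0_cbox_imp_0[OF cont _ _ _ that] by blast
  have interior: "R s \<phi> = 0" if "s \<in> {a<..<b}" and "\<phi> \<in> {0..2*pi}" for s \<phi>
    using f_0[of "(s, \<phi>)"] that by (auto simp: f_def cbox_Pair_eq cbox_interval)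
  obtain \<phi> where "\<phi> \<in> {0..2*pi}" and "R t \<theta> = R t \<phi>"
    using periodic_representative smooth_periodic_periodic[OF R t] by blast
  moreover have "R t \<phi> = 0" if "\<phi> \<in> {0..2*pi}"
    using continuous_constant_on_closure[of "{a<..<b}" "\<lambda>s. R s \<phi>" 0 t] ab t
      smooth_periodic_continuous_in_t[OF R] interior[OF _ that]
    by (simp add: closure_greaterThanLessThan)
  ultimately show ?thesis by simp
qed

lemma orthogonal_to_admissible_iff_eq_0:
  fixes R :: "real \<Rightarrow> real \<Rightarrow> complex"
  assumes ab: "a < b" and R: "smooth_periodic a b R"
  shows "(\<forall>h. admissible_variation a b h \<longrightarrow>
      integral (rect a b) (\<lambda>x. R (fst x) (snd x) \<bullet> h (fst x) (snd x)) = 0)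
    \<longleftrightarrow> (\<forall>t\<in>{a..b}. \<forall>\<theta>. R t \<theta> = 0)"
proof
  assume "\<forall>t\<in>{a..b}. \<forall>\<theta>. R t \<theta> = 0"
  then have "integral (rect a b) (\<lambda>x. R (fst x) (snd x) \<bullet> h (fst x) (snd x)) = integral (rect a b) (\<lambda>x. 0)"
    for h :: "real \<Rightarrow> real \<Rightarrow> complex"
    by (intro integral_cong) (auto simp: cbox_Pair_eq cbox_interval)
  then show "\<forall>h. admissible_variation a b h \<longrightarrow>
      integral (rect a b) (\<lambda>x. R (fst x) (snd x) \<bullet> h (fst x) (snd x)) = 0"
    by simp
qed (use smooth_periodic_eq_0_if_orthogonal[OF ab R] in blast)

theorem mainTheorem15:
  fixes A a b :: real and c :: "real \<Rightarrow> real \<Rightarrow> complex"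
  assumes "A \<ge> 0" and "a < b"
    and "smooth_path a b c" and "immersion_path a b c"
  shows "critical_point A a b c \<longleftrightarrow> geodesic_eq A a b c"
proof -
  interpret path_of_immersions A a b c
    using assms by unfold_locales auto
  have "((\<lambda>s. energy A a b (\<lambda>t \<theta>. c t \<theta> + of_real s * h t \<theta>)) has_real_derivative 0) (at 0)
      \<longleftrightarrow> integral (rect a b) (\<lambda>x. el_residual A a b c (fst x) (snd x) \<bullet> h (fst x) (snd x)) = 0"
    if "admissible_variation a b h" for h
    using DERIV_unique[OF first_variation[OF that]] first_variation[OF that] by force
  then have "critical_point A a b c \<longleftrightarrow> (\<forall>h. admissible_variation a b h \<longrightarrow>
      integral (rect a b) (\<lambda>x. el_residual A a b c (fst x) (snd x) \<bullet> h (fst x) (snd x)) = 0)"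
    unfolding critical_point_def by blast
  also have "\<dots> \<longleftrightarrow> (\<forall>t\<in>{a..b}. \<forall>\<theta>. el_residual A a b c t \<theta> = 0)"
    by (rule orthogonal_to_admissible_iff_eq_0[OF ab smooth_periodic_el_residual])
  also have "\<dots> \<longleftrightarrow> geodesic_eq A a b c"
    by (rule geodesic_eq_iff_el_residual[symmetric])
  finally show ?thesis .
qed

end
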